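(* Let $A$ be a $2\times2$ Hermitian matrix of Laurent polynomials with compatible symmetry whose symmetry type is $\mathrm{S}A(z)=\begin{bmatrix}1&\alpha(z)\\ \alpha^\star(z)&1\end{bmatrix}$, where $\alpha(z):=\mathrm{S}A_{1,2}(z)$. Suppose $\det(A(z))=C$ for all $z\in\mathbb T$, for some negative constant $C$. Then there exists a $2\times2$ matrix $U$ of Laurent polynomials with compatible symmetry such that $A(z)=U(z)\,\mathrm{diag}(1,-1)\,U^\star(z)$ and $$\frac{\mathrm{S}U_{1,1}(z)}{\mathrm{S}U_{2,1}(z)}=\frac{\mathrm{S}U_{1,2}(z)}{\mathrm{S}U_{2,2}(z)}=\alpha(z).$$
   Context: Laurent polynomials $u(z)=\sum_ku(k)z^k$ with finitely many nonzero complex coefficients; $\mathbb T:=\{z\in\mathbb C:|z|=1\}$. For a matrix $P(z)=\sum_kP(k)z^k$, $P^\star(z):=\sum_k\overline{P(k)}^Tz^{-k}$; Hermitian means $P^\star=P$. $u$ has symmetry of type $\epsilon z^c$ ($\epsilon\in\{\pm1\},c\in\mathbb Z$) if $u(z)=\epsilon z^cu(z^{-1})$; for nonzero $u$, $\mathrm{S}u(z):=u(z)/u(z^{-1})$; zero has every type; for a type $\beta=\epsilon z^c$, $\beta^\star:=\epsilon z^{-c}$. For a matrix $P$ whose entries have symmetry, $\mathrm{S}P$ is taken entrywise. An $r\times s$ matrix $P$ has compatible symmetry if there exist types $\tau_1,\dots,\tau_r,\rho_1,\dots,\rho_s$, each of the form $\pm z^m$ ($m\in\mathbb Z$), such that each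 entry $P_{j,k}$ has symmetry of type $\tau_j^{-1}\rho_k$. *)

theory Defs
  imports "HOL-Analysis.Analysis"
begin

text \<open>Laurent polynomials are represented by their coefficient functions
  u :: int => complex, with u(z) = sum_k u k * z^k; they must have finite support.\<close>

type_synonym lpoly = "int \<Rightarrow> complex"

definition laurent :: "lpoly \<Rightarrow> bool" where
  "laurent u \<longleftrightarrow> finite {k. u k \<noteq> 0}"

definition lp_eval :: "lpoly \<Rightarrow> complex \<Rightarrow> complex" where
  "lp_eval u z = (\<Sum>k\<in>{k. u k \<noteq> 0}. u k * z powi k)"

definition lp_add :: "lpoly \<Rightarrow> lpoly \<Rightarrow> lpoly" where
  "lp_add u v = (\<lambda>k. u k + v k)"

definition lp_neg :: "lpoly \<Rightarrow> lpoly" where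
  "lp_neg u = (\<lambda>k. - u k)"

definition lp_mult :: "lpoly \<Rightarrow> lpoly \<Rightarrow> lpoly" where
  "lp_mult u v = (\<lambda>n. \<Sum>k\<in>{k. u k \<noteq> 0}. u k * v (n - k))"

definition lp_star :: "lpoly \<Rightarrow> lpoly" where
  "lp_star u = (\<lambda>k. cnj (u (- k)))"

text \<open>A symmetry type eps * z^c is represented by the pair (eps, c), with eps in {1,-1}.\<close>
type_synonym symtype = "int \<times> int"

definition valid_type :: "symtype \<Rightarrow> bool" where
  "valid_type t \<longleftrightarrow> fst t = 1 \<or> fst t = -1"

definition type_mult :: "symtype \<Rightarrow> symtype \<Rightarrow> symtype" where
  "type_mult s t = (fst s * fst t, snd s + snd t)"

definition type_inv :: "symtype \<Rightarrow> symtype" where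
  "type_inv t = (fst t, - snd t)"

definition type_star :: "symtype \<Rightarrow> symtype" where
  "type_star t = (fst t, - snd t)"

text \<open>u has symmetry of type eps z^c: u(z) = eps z^c u(1/z), i.e. u k = eps * u (c - k)
  for all k. (Zero has every type.)\<close>
definition has_sym :: "lpoly \<Rightarrow> symtype \<Rightarrow> bool" where
  "has_sym u t \<longleftrightarrow> valid_type t \<and> (\<forall>k. u k = of_int (fst t) * u (snd t - k))"

text \<open>Matrices: P :: nat => nat => lpoly, entries indexed by 1..r and 1..s.
  Compatible symmetry for an r x s matrix.\<close>
definition compat_sym :: "nat \<Rightarrow> nat \<Rightarrow> (nat \<Rightarrow> nat \<Rightarrow> lpoly) \<Rightarrow> bool" where
  "compat_sym r s P \<longleftrightarrow>
     (\<exists>\<tau> \<rho> :: nat \<Rightarrow> symtype.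
        (\<forall>j\<in>{1..r}. valid_type (\<tau> j)) \<and> (\<forall>k\<in>{1..s}. valid_type (\<rho> k)) \<and>
        (\<forall>j\<in>{1..r}. \<forall>k\<in>{1..s}. has_sym (P j k) (type_mult (type_inv (\<tau> j)) (\<rho> k))))"

end

theory Submission
  imports Defs "HOL-Library.Poly_Mapping" "HOL-Computational_Algebra.Polynomial"
begin

text \<open>Write the matrix as \<open>M = [[a, b], [b\<^sup>\<star>, d]]\<close>. A congruence \<open>M \<mapsto> E M E\<^sup>\<star>\<close> by a matrix \<open>E\<close>
  of compatible symmetry whose determinant is a nonzero monomial, i.e. a unit, preserves all
  hypotheses (\<open>C\<close> is scaled by \<open>|det E|\<^sup>2\<close>), and a factorization \<open>E M E\<^sup>\<star> = V J V\<^sup>\<star>\<close> with \<open>J = diag(1, -1)\<close>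
  gives \<open>M = (E\<^sup>-\<^sup>1 V) J (E\<^sup>-\<^sup>1 V)\<^sup>\<star>\<close>. So we induct on \<open>deg a + deg d\<close>. Comparing top
  coefficients in \<open>a d - b b\<^sup>\<star> = C\<close> pins down the top degree of \<open>b\<close>; then a shear
  \<open>[[1, f], [0, 1]]\<close> with a symmetric binomial \<open>f\<close> lowers \<open>deg a\<close>, except when \<open>deg a = deg d\<close> and
  \<open>b\<close> is antisymmetric, where \<open>[[1 + z, t z\<^sup>h (1 - z)], [1 - z, t z\<^sup>h (1 + z)]]\<close> lowers both
  degrees. For constant \<open>d \<noteq> 0\<close> a shear diagonalizes \<open>M\<close>, and for \<open>d = 0\<close> a factorization can be
  written down directly.\<close>

section \<open>Laurent polynomials as finitely supported maps\<close>

text \<open>On \<open>int \<Rightarrow>\<^sub>0 complex\<close> the ring structure comes for free; \<open>lcoeff\<close> gives back the coefficient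
  functions used in the statement.\<close>
type_synonym lpm = "int \<Rightarrow>\<^sub>0 complex"

abbreviation lcoeff :: "lpm \<Rightarrow> int \<Rightarrow> complex" where "lcoeff \<equiv> Poly_Mapping.lookup"
abbreviation lsupp :: "lpm \<Rightarrow> int set" where "lsupp \<equiv> Poly_Mapping.keys"
abbreviation lmonom :: "int \<Rightarrow> complex \<Rightarrow> lpm" where "lmonom \<equiv> Poly_Mapping.single"

lemma lcoeff_add: "lcoeff (p + q) k = lcoeff p k + lcoeff q k"
  by (simp add: lookup_add)

lemma lcoeff_diff: "lcoeff (p - q) k = lcoeff p k - lcoeff q k"
  by (simp add: lookup_minus)

lemma lcoeff_monom: "lcoeff (lmonom j c) k = (if k = j then c else 0)"
  by (simp add: lookup_single when_def)

lemma lcoeff_one: "lcoeff 1 k = (if k = 0 then 1 else 0)"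
  by (simp add: lookup_one when_def)

lemma lcoeff_mult: "lcoeff (p * q) k = (\<Sum>l\<in>lsupp p. lcoeff p l * lcoeff q (k - l))"
proof -
  have "Sum_any (\<lambda>j. lcoeff q j when k = l + j) = lcoeff q (k - l)" for l
  proof -
    have "(\<lambda>j. lcoeff q j when k = l + j) = (\<lambda>j. if j = k - l then lcoeff q j else 0)"
      by (auto simp: when_def fun_eq_iff)
    then show ?thesis by (simp only:) (rule Sum_any.delta)
  qed
  then show ?thesis unfolding lookup_mult
    by (subst Sum_any.expand_superset[of "lsupp p"]) (auto simp: in_keys_iff)
qed

lemma lcoeff_mult_superset:
  assumes "finite S" "\<And>l. l \<notin> S \<Longrightarrow> lcoeff p l = 0"
  shows "lcoeff (p * q) k = (\<Sum>l\<in>S. lcoeff p l * lcoeff q (k - l))"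
  unfolding lcoeff_mult
  by (rule sum.mono_neutral_left) (use assms in \<open>auto simp: in_keys_iff\<close>)

lemma lcoeff_monom_mult: "lcoeff (lmonom j c * q) k = c * lcoeff q (k - j)"
  by (subst lcoeff_mult_superset[of "{j}"]) (auto simp: lcoeff_monom)

lemma lcoeff_mult_top:
  assumes P: "\<And>k. k > P \<Longrightarrow> lcoeff p k = 0" and Q: "\<And>k. k > Q \<Longrightarrow> lcoeff q k = 0"
  shows "n > P + Q \<Longrightarrow> lcoeff (p * q) n = 0"
    and "lcoeff (p * q) (P + Q) = lcoeff p P * lcoeff q Q"
    and "lcoeff (p * q) (P + Q - 1) = lcoeff p P * lcoeff q (Q - 1) + lcoeff p (P - 1) * lcoeff q Q"
proof -
  define S where "S = lsupp p \<union> {P, P - 1}"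
  have fS: "finite S" and pS: "\<And>l. l \<notin> S \<Longrightarrow> lcoeff p l = 0"
    by (auto simp: S_def in_keys_iff)
  have expand: "lcoeff (p * q) n = (\<Sum>l\<in>S. lcoeff p l * lcoeff q (n - l))" for n
    by (rule lcoeff_mult_superset[OF fS pS])
  have reduce: "lcoeff (p * q) n = (\<Sum>l\<in>{P, P - 1}. lcoeff p l * lcoeff q (n - l))"
    if "P + Q - 1 \<le> n" for n
    unfolding expand
  proof (rule sum.mono_neutral_right)
    show "\<forall>l\<in>S - {P, P - 1}. lcoeff p l * lcoeff q (n - l) = 0"
    proof
      fix l assume "l \<in> S - {P, P - 1}"
      then show "lcoeff p l * lcoeff q (n - l) = 0"
        using P[of l] Q[of "n - l"] that by (cases "l > P") auto
    qed
  qed (use fS in \<open>auto simp: S_def\<close>)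
  show "lcoeff (p * q) n = 0" if "n > P + Q" for n
  proof -
    have "lcoeff p l * lcoeff q (n - l) = 0" for l
      using P[of l] Q[of "n - l"] that by (cases "l > P") auto
    then show ?thesis unfolding expand by (intro sum.neutral) blast
  qed
  show "lcoeff (p * q) (P + Q) = lcoeff p P * lcoeff q Q"
    using reduce[of "P + Q"] Q[of "Q + 1"] by simp
  show "lcoeff (p * q) (P + Q - 1) = lcoeff p P * lcoeff q (Q - 1) + lcoeff p (P - 1) * lcoeff q Q"
    using reduce[of "P + Q - 1"] by (simp add: algebra_simps)
qed

definition lstar :: "lpm \<Rightarrow> lpm" where
  "lstar p = Abs_poly_mapping (\<lambda>k. cnj (lcoeff p (- k)))"

lemma lcoeff_lstar: "lcoeff (lstar p) k = cnj (lcoeff p (- k))"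
proof -
  have "{k. cnj (lcoeff p (- k)) \<noteq> 0} = uminus ` lsupp p"
  proof (rule set_eqI)
    show "x \<in> {k. cnj (lcoeff p (- k)) \<noteq> 0} \<longleftrightarrow> x \<in> uminus ` lsupp p" for x
      by (auto simp: in_keys_iff image_iff intro!: bexI[of _ "- x"])
  qed
  then show ?thesis unfolding lstar_def by simp
qed

lemma lstar_add: "lstar (p + q) = lstar p + lstar q"
  by (rule poly_mapping_eqI) (simp add: lcoeff_lstar lcoeff_add)

lemma lstar_diff: "lstar (p - q) = lstar p - lstar q"
  by (rule poly_mapping_eqI) (simp add: lcoeff_lstar lcoeff_diff)

lemma lstar_uminus: "lstar (- p) = - lstar p"
  by (rule poly_mapping_eqI) (simp add: lcoeff_lstar)

lemma lstar_lstar: "lstar (lstar p) = p"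
  by (rule poly_mapping_eqI) (simp add: lcoeff_lstar)

lemma lstar_monom: "lstar (lmonom k c) = lmonom (- k) (cnj c)"
  by (rule poly_mapping_eqI) (auto simp: lcoeff_lstar lcoeff_monom)

lemma lstar_one: "lstar 1 = 1"
  by (rule poly_mapping_eqI) (auto simp: lcoeff_lstar lcoeff_one)

lemma lstar_zero: "lstar 0 = 0"
  by (rule poly_mapping_eqI) (auto simp: lcoeff_lstar)

lemma lstar_mult: "lstar (p * q) = lstar p * lstar q"
proof (rule poly_mapping_eqI)
  fix n
  have "lcoeff (lstar p * lstar q) n = (\<Sum>l\<in>uminus ` lsupp p. lcoeff (lstar p) l * lcoeff (lstar q) (n - l))"
    by (rule lcoeff_mult_superset) (auto simp: lcoeff_lstar, metis image_eqI in_keys_iff minus_minus)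
  also have "\<dots> = (\<Sum>l\<in>lsupp p. lcoeff (lstar p) (- l) * lcoeff (lstar q) (n + l))"
    by (subst sum.reindex) (auto intro: inj_onI)
  also have "\<dots> = lcoeff (lstar (p * q)) n"
    by (simp add: lcoeff_lstar lcoeff_mult)
  finally show "lcoeff (lstar (p * q)) n = lcoeff (lstar p * lstar q) n" by simp
qed

lemmas lstar_simps = lstar_add lstar_diff lstar_uminus lstar_lstar lstar_monom lstar_one lstar_zero
  lstar_mult

definition leval :: "lpm \<Rightarrow> complex \<Rightarrow> complex" where
  "leval p z = (\<Sum>k\<in>lsupp p. lcoeff p k * z powi k)"

lemma leval_superset:
  assumes "finite S" "\<And>l. l \<notin> S \<Longrightarrow> lcoeff p l = 0"
  shows "leval p z = (\<Sum>k\<in>S. lcoeff p k * z powi k)"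
  unfolding leval_def
  by (rule sum.mono_neutral_left) (use assms in \<open>auto simp: in_keys_iff\<close>)

lemma leval_add: "leval (p + q) z = leval p z + leval q z"
proof -
  have "leval (p + q) z = (\<Sum>k\<in>lsupp p \<union> lsupp q. lcoeff (p + q) k * z powi k)"
    by (rule leval_superset) (auto simp: in_keys_iff lcoeff_add)
  also have "\<dots> = leval p z + leval q z"
    by (subst (1 2) leval_superset[of "lsupp p \<union> lsupp q"])
      (auto simp: in_keys_iff lcoeff_add distrib_right sum.distrib)
  finally show ?thesis .
qed

lemma leval_diff: "leval (p - q) z = leval p z - leval q z"
  using leval_add[of "p - q" q z] by simp

lemma leval_monom: "leval (lmonom k c) z = c * z powi k"
  by (subst leval_superset[of "{k}"]) (auto simp: lcoeff_monom)

lemma leval_monom_mult: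
  assumes "z \<noteq> 0"
  shows "leval (lmonom j c * q) z = c * z powi j * leval q z"
proof -
  have "leval (lmonom j c * q) z = (\<Sum>k\<in>(+) j ` lsupp q. lcoeff (lmonom j c * q) k * z powi k)"
  proof (rule leval_superset)
    fix l assume "l \<notin> (+) j ` lsupp q"
    then have "l - j \<notin> lsupp q" by (metis add.commute diff_add_cancel image_eqI)
    then show "lcoeff (lmonom j c * q) l = 0" by (simp add: lcoeff_monom_mult in_keys_iff)
  qed simp
  also have "\<dots> = (\<Sum>l\<in>lsupp q. lcoeff (lmonom j c * q) (j + l) * z powi (j + l))"
    by (subst sum.reindex) (auto intro: inj_onI)
  also have "\<dots> = (\<Sum>l\<in>lsupp q. c * z powi j * (lcoeff q l * z powi l))"
    using assms by (intro sum.cong) (auto simp: lcoeff_monom_mult power_int_add)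
  also have "\<dots> = c * z powi j * leval q z"
    by (simp add: leval_def sum_distrib_left)
  finally show ?thesis .
qed

lemma leval_mult:
  assumes "z \<noteq> 0"
  shows "leval (p * q) z = leval p z * leval q z"
proof (induction p rule: update_induct)
  case const
  then show ?case by (simp add: leval_def)
next
  case (update f j c)
  then have "Poly_Mapping.update j c f = f + lmonom j c"
    by (intro poly_mapping_eqI) (auto simp: in_keys_iff lookup_update lcoeff_add lcoeff_monom)
  then show ?case
    using update.IH assms by (simp add: distrib_right leval_add leval_monom_mult leval_monom)
qed

lemma infinite_unit_circle: "infinite {z::complex. cmod z = 1}"
proof
  assume fin: "finite {z::complex. cmod z = 1}"
  have eq: "{z::complex. cmod z = 1} = sphere 0 1" by (auto simp: mem_sphere)
  have "connected (sphere (0::complex) 1)" by (rule connected_sphere) simp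
  then obtain a where "sphere (0::complex) 1 = {a}"
    using fin eq connected_finite_iff_sing[of "sphere (0::complex) 1"] by auto
  moreover have "1 \<in> sphere (0::complex) 1" "-1 \<in> sphere (0::complex) 1" by (auto simp: mem_sphere)
  ultimately show False by auto
qed

lemma leval_poly_shift:
  obtains P :: "complex poly" and n :: nat
  where "\<And>z. z \<noteq> 0 \<Longrightarrow> poly P z = z ^ n * leval p z" and "P = 0 \<Longrightarrow> p = 0"
proof -
  define N where "N = Max (abs ` lsupp p)"
  have bnd: "\<bar>k\<bar> \<le> N" if "k \<in> lsupp p" for k
    unfolding N_def using that by (intro Max_ge) auto
  define P :: "complex poly" where "P = (\<Sum>k\<in>lsupp p. monom (lcoeff p k) (nat (k + N)))"
  have "poly P z = z ^ nat N * leval p z" if "z \<noteq> 0" for z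
  proof -
    have "z ^ nat (k + N) = z ^ nat N * z powi k" if "k \<in> lsupp p" for k
    proof -
      have "k + N \<ge> 0" "N \<ge> 0" using bnd[OF that] by auto
      then have "z ^ nat (k + N) = z powi (k + N)" "z ^ nat N = z powi N"
        by (simp_all add: power_int_def)
      then show ?thesis using \<open>z \<noteq> 0\<close> by (simp add: power_int_add mult.commute)
    qed
    then have "poly P z = (\<Sum>k\<in>lsupp p. z ^ nat N * (lcoeff p k * z powi k))"
      by (simp add: P_def poly_sum poly_monom mult.left_commute)
    then show ?thesis
      by (simp add: leval_def sum_distrib_left)
  qed
  moreover have "coeff P (nat (j + N)) = lcoeff p j" if j: "j \<in> lsupp p" for j
  proof -
    have "coeff P (nat (j + N)) = (\<Sum>k\<in>lsupp p. if nat (k + N) = nat (j + N) then lcoeff p k else 0)"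
      by (simp add: P_def coeff_sum coeff_monom)
    also have "\<dots> = (\<Sum>k\<in>lsupp p. if k = j then lcoeff p k else 0)"
    proof (intro sum.cong refl)
      fix k assume k: "k \<in> lsupp p"
      then have "(nat (k + N) = nat (j + N)) = (k = j)"
        using bnd[OF k] bnd[OF j] by (simp add: eq_nat_nat_iff)
      then show "(if nat (k + N) = nat (j + N) then lcoeff p k else 0) = (if k = j then lcoeff p k else 0)"
        by simp
    qed
    also have "\<dots> = lcoeff p j" using j by simp
    finally show ?thesis .
  qed
  then have "P = 0 \<Longrightarrow> p = 0"
    by (metis coeff_0 in_keys_iff keys_eq_empty ex_in_conv)
  ultimately show thesis by (rule that)
qed

lemma lpm_eq_0_if_leval_unit_circle:
  assumes "\<And>z. cmod z = 1 \<Longrightarrow> leval p z = 0"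
  shows "p = 0"
proof -
  obtain P n where P: "\<And>z. z \<noteq> 0 \<Longrightarrow> poly P z = z ^ n * leval p z" and "P = 0 \<Longrightarrow> p = 0"
    using leval_poly_shift[of p] by blast
  have "{z. cmod z = 1} \<subseteq> {z. poly P z = 0}"
  proof
    fix z :: complex assume "z \<in> {z. cmod z = 1}"
    then have "cmod z = 1" "z \<noteq> 0" by auto
    then show "z \<in> {z. poly P z = 0}" using P assms by simp
  qed
  then have "P = 0"
    using finite_subset infinite_unit_circle poly_roots_finite[of P] by blast
  then show "p = 0" by fact
qed

section \<open>Symmetry types\<close>

lemma type_mult_inv_self: "fst t = 1 \<or> fst t = -1 \<Longrightarrow> type_mult t (type_inv t) = (1, 0)"
  by (cases t) (auto simp: type_mult_def type_inv_def)

definition lsym :: "lpm \<Rightarrow> symtype \<Rightarrow> bool" where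
  "lsym p t \<longleftrightarrow> has_sym (lcoeff p) t"

lemma lsym_iff:
  "lsym p t \<longleftrightarrow> (fst t = 1 \<or> fst t = -1) \<and> (\<forall>k. lcoeff p k = of_int (fst t) * lcoeff p (snd t - k))"
  by (simp add: lsym_def has_sym_def valid_type_def)

lemma lsym_valid: "lsym p t \<Longrightarrow> fst t = 1 \<or> fst t = -1"
  by (simp add: lsym_iff)

lemma lsym_lcoeff: "lsym p t \<Longrightarrow> lcoeff p k = of_int (fst t) * lcoeff p (snd t - k)"
  unfolding lsym_iff by blast

lemma lsymI:
  "fst t = 1 \<or> fst t = -1 \<Longrightarrow> (\<And>k. lcoeff p k = of_int (fst t) * lcoeff p (snd t - k)) \<Longrightarrow> lsym p t"
  unfolding lsym_iff by blast

lemma lsym_zero: "fst t = 1 \<or> fst t = -1 \<Longrightarrow> lsym 0 t"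
  by (rule lsymI) auto

lemma lsym_one: "lsym 1 (1, 0)"
  by (rule lsymI) (auto simp: lcoeff_one)

lemma lsym_monom: "lsym (lmonom k c) (1, 2 * k)"
  by (rule lsymI) (auto simp: lcoeff_monom)

lemma lsym_add: "lsym p t \<Longrightarrow> lsym q t \<Longrightarrow> lsym (p + q) t"
proof (rule lsymI)
  fix k assume "lsym p t" "lsym q t"
  then show "lcoeff (p + q) k = of_int (fst t) * lcoeff (p + q) (snd t - k)"
    using lsym_lcoeff[of p t k] lsym_lcoeff[of q t k] by (simp add: lcoeff_add distrib_left)
qed (rule lsym_valid)

lemma lsym_uminus: "lsym p t \<Longrightarrow> lsym (- p) t"
proof (rule lsymI)
  fix k assume "lsym p t"
  then show "lcoeff (- p) k = of_int (fst t) * lcoeff (- p) (snd t - k)"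
    using lsym_lcoeff[of p t k] by simp
qed (rule lsym_valid)

lemma lsym_diff: "lsym p t \<Longrightarrow> lsym q t \<Longrightarrow> lsym (p - q) t"
proof (rule lsymI)
  fix k assume "lsym p t" "lsym q t"
  then show "lcoeff (p - q) k = of_int (fst t) * lcoeff (p - q) (snd t - k)"
    using lsym_lcoeff[of p t k] lsym_lcoeff[of q t k] by (simp add: lcoeff_diff right_diff_distrib)
qed (rule lsym_valid)

lemma lsym_lstar:
  assumes "lsym p t"
  shows "lsym (lstar p) (type_inv t)"
proof (rule lsymI)
  show "fst (type_inv t) = 1 \<or> fst (type_inv t) = -1"
    using lsym_valid[OF assms] by (simp add: type_inv_def)
  show "lcoeff (lstar p) k = of_int (fst (type_inv t)) * lcoeff (lstar p) (snd (type_inv t) - k)" for k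
    using lsym_lcoeff[OF assms, of "- k"] lsym_valid[OF assms]
    by (auto simp: lcoeff_lstar type_inv_def add.commute)
qed

lemma lsym_mult:
  assumes p: "lsym p s" and q: "lsym q t"
  shows "lsym (p * q) (type_mult s t)"
proof -
  obtain e1 c1 where s: "s = (e1, c1)" by (cases s)
  obtain e2 c2 where t: "t = (e2, c2)" by (cases t)
  have e1: "e1 = 1 \<or> e1 = -1" and e2: "e2 = 1 \<or> e2 = -1"
    using lsym_valid[OF p] lsym_valid[OF q] s t by auto
  have pk: "lcoeff p k = of_int e1 * lcoeff p (c1 - k)" for k using lsym_lcoeff[OF p, of k] s by simp
  have qk: "lcoeff q k = of_int e2 * lcoeff q (c2 - k)" for k using lsym_lcoeff[OF q, of k] t by simp
  have reflect: "c1 - l \<in> lsupp p" if "l \<in> lsupp p" for l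
    using that pk[of l] by (auto simp: in_keys_iff)
  have key: "lcoeff (p * q) (c1 + c2 - k) = of_int (e1 * e2) * lcoeff (p * q) k" for k
  proof -
    have "lcoeff (p * q) (c1 + c2 - k) = (\<Sum>l\<in>lsupp p. lcoeff p l * lcoeff q (c1 + c2 - k - l))"
      by (rule lcoeff_mult)
    also have "\<dots> = (\<Sum>l\<in>lsupp p. lcoeff p (c1 - l) * lcoeff q (c1 + c2 - k - (c1 - l)))"
      by (rule sum.reindex_bij_witness[of _ "\<lambda>l. c1 - l" "\<lambda>l. c1 - l"]) (auto intro: reflect)
    also have "\<dots> = (\<Sum>l\<in>lsupp p. of_int (e1 * e2) * (lcoeff p l * lcoeff q (k - l)))"
    proof (intro sum.cong refl)
      fix l
      have "lcoeff p (c1 - l) = of_int e1 * lcoeff p l" using pk[of "c1 - l"] e1 by auto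
      moreover have "lcoeff q (c1 + c2 - k - (c1 - l)) = of_int e2 * lcoeff q (k - l)"
        using qk[of "k - l"] e2 by (auto simp: algebra_simps)
      ultimately show "lcoeff p (c1 - l) * lcoeff q (c1 + c2 - k - (c1 - l))
          = of_int (e1 * e2) * (lcoeff p l * lcoeff q (k - l))"
        by (simp add: algebra_simps)
    qed
    also have "\<dots> = of_int (e1 * e2) * lcoeff (p * q) k"
      by (simp add: lcoeff_mult sum_distrib_left)
    finally show ?thesis .
  qed
  have "of_int (e1 * e2) * of_int (e1 * e2) = (1::complex)"
    using e1 e2 by auto
  show ?thesis
  proof (rule lsymI)
    show "fst (type_mult s t) = 1 \<or> fst (type_mult s t) = -1"
      using e1 e2 by (auto simp: s t type_mult_def)
    show "lcoeff (p * q) k = of_int (fst (type_mult s t)) * lcoeff (p * q) (snd (type_mult s t) - k)" for k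
      using key[of k] \<open>of_int (e1 * e2) * of_int (e1 * e2) = (1::complex)\<close>
      by (simp add: s t type_mult_def mult.assoc[symmetric])
  qed
qed

lemma lsym_mult_eq: "lsym p s \<Longrightarrow> lsym q t \<Longrightarrow> type_mult s t = u \<Longrightarrow> lsym (p * q) u"
  using lsym_mult by blast

lemma lsym_const_mult: "lsym p t \<Longrightarrow> lsym (lmonom 0 c * p) t"
  using lsym_mult[OF lsym_monom[of 0 c]] by (simp add: type_mult_def)

section \<open>Degree of a Laurent polynomial\<close>

definition ldeg :: "lpm \<Rightarrow> nat" where
  "ldeg p = nat (Max (insert 0 (lsupp p)))"

lemma ldeg_int: "int (ldeg p) = Max (insert 0 (lsupp p))"
proof -
  have "0 \<le> Max (insert 0 (lsupp p))" by (rule Max_ge) auto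
  then show ?thesis by (simp add: ldeg_def)
qed

lemma ldeg_zero [simp]: "ldeg 0 = 0"
  by (simp add: ldeg_def)

lemma lcoeff_above_ldeg: "k > int (ldeg p) \<Longrightarrow> lcoeff p k = 0"
proof (rule ccontr)
  assume "k > int (ldeg p)" "lcoeff p k \<noteq> 0"
  then have "k \<le> Max (insert 0 (lsupp p))" by (intro Max_ge) (auto simp: in_keys_iff)
  then show False using \<open>k > int (ldeg p)\<close> ldeg_int[of p] by linarith
qed

lemma ldeg_le: "(\<And>k. k > int N \<Longrightarrow> lcoeff p k = 0) \<Longrightarrow> ldeg p \<le> N"
proof -
  assume "\<And>k. k > int N \<Longrightarrow> lcoeff p k = 0"
  then have "\<forall>k\<in>lsupp p. k \<le> int N" by (meson in_keys_iff not_le)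
  then have "Max (insert 0 (lsupp p)) \<le> int N" by simp
  then show "ldeg p \<le> N" using ldeg_int[of p] by linarith
qed

lemma lcoeff_below_ldeg: "lsym p (1, 0) \<Longrightarrow> k < - int (ldeg p) \<Longrightarrow> lcoeff p k = 0"
  using lcoeff_above_ldeg[of p "- k"] lsym_lcoeff[of p "(1, 0)" k] by simp

lemma lcoeff_ldeg_neq_0:
  assumes "lsym p (1, 0)" "p \<noteq> 0"
  shows "lcoeff p (ldeg p) \<noteq> 0"
proof -
  obtain k where k: "k \<in> lsupp p" using assms(2) keys_eq_empty by blast
  have "\<bar>k\<bar> \<in> lsupp p"
    using k lsym_lcoeff[OF assms(1), of k] by (cases "k \<ge> 0") (auto simp: in_keys_iff)
  then have "Max (lsupp p) \<ge> 0" by (metis Max_ge abs_ge_zero finite_keys order_trans)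
  moreover have "Max (insert 0 (lsupp p)) = max 0 (Max (lsupp p))"
    using k by (intro Max_insert) auto
  ultimately have "int (ldeg p) = Max (lsupp p)" using ldeg_int[of p] by simp
  moreover have "Max (lsupp p) \<in> lsupp p" using k by (intro Max_in) auto
  ultimately show ?thesis by (simp add: in_keys_iff)
qed

lemma ldeg_eq_0_imp_const: "lsym p (1, 0) \<Longrightarrow> ldeg p = 0 \<Longrightarrow> p = lmonom 0 (lcoeff p 0)"
proof (rule poly_mapping_eqI)
  fix k assume "lsym p (1, 0)" "ldeg p = 0"
  then show "lcoeff p k = lcoeff (lmonom 0 (lcoeff p 0)) k"
    using lcoeff_above_ldeg[of p k] lcoeff_below_ldeg[of p k]
    by (cases k "0::int" rule: linorder_cases) (auto simp: lcoeff_monom)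
qed

lemma lcoeff_real_if_hermitian: "lstar p = p \<Longrightarrow> lsym p (1, 0) \<Longrightarrow> cnj (lcoeff p k) = lcoeff p k"
  by (metis lcoeff_lstar lsym_lcoeff[of p "(1, 0)" "- k"] diff_0 fst_conv mult_1 of_int_1 snd_conv minus_minus)

section \<open>Congruences of Hermitian matrices\<close>

text \<open>A Hermitian matrix \<open>[[a, b], [b\<^sup>\<star>, d]]\<close> is represented by the triple \<open>(a, b, d)\<close>;
  \<open>sesq_form a b d x1 x2 y1 y2\<close> is \<open>x M y\<^sup>\<star>\<close> for the row vectors \<open>x = (x1, x2)\<close> and
  \<open>y = (y1, y2)\<close>, so the congruence \<open>M \<mapsto> E M E\<^sup>\<star>\<close> by \<open>E = [[x1, x2], [y1, y2]]\<close> gives the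
  triple of values at \<open>(x, x)\<close>, \<open>(x, y)\<close> and \<open>(y, y)\<close>.\<close>

definition sesq_form :: "lpm \<Rightarrow> lpm \<Rightarrow> lpm \<Rightarrow> lpm \<Rightarrow> lpm \<Rightarrow> lpm \<Rightarrow> lpm \<Rightarrow> lpm" where
  "sesq_form a b d x1 x2 y1 y2 =
     x1 * a * lstar y1 + x1 * b * lstar y2 + x2 * lstar b * lstar y1 + x2 * d * lstar y2"

lemma sesq_form_J: "sesq_form 1 0 (- 1) x1 x2 y1 y2 = x1 * lstar y1 - x2 * lstar y2"
  by (simp add: sesq_form_def lstar_zero)

lemma sesq_form_unit_rows:
  "sesq_form a b d 1 0 1 0 = a" "sesq_form a b d 1 0 0 1 = b" "sesq_form a b d 0 1 0 1 = d"
  "sesq_form a b d 0 1 1 0 = lstar b"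
  by (simp_all add: sesq_form_def lstar_one lstar_zero)

lemma lstar_sesq_form:
  "lstar a = a \<Longrightarrow> lstar d = d \<Longrightarrow> lstar (sesq_form a b d x1 x2 y1 y2) = sesq_form a b d y1 y2 x1 x2"
  by (simp add: sesq_form_def lstar_simps algebra_simps)

lemma sesq_form_compose:
  assumes "lstar a = a" "lstar d = d"
  shows "sesq_form (sesq_form a b d x1 x2 x1 x2) (sesq_form a b d x1 x2 y1 y2) (sesq_form a b d y1 y2 y1 y2)
           p1 p2 q1 q2
       = sesq_form a b d (p1 * x1 + p2 * y1) (p1 * x2 + p2 * y2) (q1 * x1 + q2 * y1) (q1 * x2 + q2 * y2)"
  using assms by (simp add: sesq_form_def lstar_simps algebra_simps)

lemma sesq_form_det:
  assumes "lstar a = a" "lstar d = d"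
  shows "sesq_form a b d x1 x2 x1 x2 * sesq_form a b d y1 y2 y1 y2
           - sesq_form a b d x1 x2 y1 y2 * lstar (sesq_form a b d x1 x2 y1 y2)
       = (x1 * y2 - x2 * y1) * lstar (x1 * y2 - x2 * y1) * (a * d - b * lstar b)"
  using assms by (simp add: lstar_sesq_form) (simp add: sesq_form_def lstar_simps algebra_simps)

text \<open>The rows of \<open>E = [[x1, x2], [y1, y2]]\<close> have symmetry types \<open>(s, \<beta> s)\<close> and \<open>(t, \<beta> t)\<close>;
  such an \<open>E\<close> maps a matrix whose off-diagonal entry has type \<open>\<beta>\<close> to one of type \<open>s / t\<close>.\<close>
definition sym_rows :: "symtype \<Rightarrow> symtype \<Rightarrow> symtype \<Rightarrow> lpm \<Rightarrow> lpm \<Rightarrow> lpm \<Rightarrow> lpm \<Rightarrow> bool" where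
  "sym_rows \<beta> s t x1 x2 y1 y2 \<longleftrightarrow>
     lsym x1 s \<and> lsym x2 (type_mult \<beta> s) \<and> lsym y1 t \<and> lsym y2 (type_mult \<beta> t)"

lemma sym_rows_valid:
  assumes "sym_rows \<beta> s t x1 x2 y1 y2"
  shows "fst s = 1 \<or> fst s = -1" "fst t = 1 \<or> fst t = -1" "fst \<beta> = 1 \<or> fst \<beta> = -1"
proof -
  have "fst s = 1 \<or> fst s = -1" "fst t = 1 \<or> fst t = -1"
    "fst \<beta> * fst s = 1 \<or> fst \<beta> * fst s = -1"
    using assms lsym_valid[of x1 s] lsym_valid[of y1 t] lsym_valid[of x2 "type_mult \<beta> s"]
    by (simp_all add: sym_rows_def type_mult_def)
  then show "fst s = 1 \<or> fst s = -1" "fst t = 1 \<or> fst t = -1" "fst \<beta> = 1 \<or> fst \<beta> = -1"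
    by auto
qed

lemma lsym_sesq_form:
  assumes "lsym a (1, 0)" "lsym b \<alpha>" "lsym d (1, 0)" "sym_rows \<alpha> s t x1 x2 y1 y2"
  shows "lsym (sesq_form a b d x1 x2 y1 y2) (type_mult s (type_inv t))"
proof -
  obtain e c where \<alpha>: "\<alpha> = (e, c)" by fastforce
  have "e = 1 \<or> e = -1" using lsym_valid[OF assms(2)] \<alpha> by simp
  then have types: "type_mult (type_mult s (1, 0)) (type_inv t) = type_mult s (type_inv t)"
    "type_mult (type_mult s \<alpha>) (type_inv (type_mult \<alpha> t)) = type_mult s (type_inv t)"
    "type_mult (type_mult (type_mult \<alpha> s) (type_inv \<alpha>)) (type_inv t) = type_mult s (type_inv t)"
    "type_mult (type_mult (type_mult \<alpha> s) (1, 0)) (type_inv (type_mult \<alpha> t)) = type_mult s (type_inv t)"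
    by (auto simp: \<alpha> type_mult_def type_inv_def)
  show ?thesis
    using assms lsym_mult lsym_lstar types unfolding sesq_form_def sym_rows_def
    by (metis lsym_add)
qed

text \<open>\<open>[[a, b], [b\<^sup>\<star>, d]] = U J U\<^sup>\<star>\<close> with \<open>J = diag(1, -1)\<close> and \<open>U\<close> of compatible symmetry.\<close>
definition J_factorable :: "lpm \<Rightarrow> lpm \<Rightarrow> lpm \<Rightarrow> symtype \<Rightarrow> bool" where
  "J_factorable a b d \<alpha> \<longleftrightarrow> (\<exists>u11 u12 u21 u22 \<beta> s t.
     sym_rows \<beta> s t u11 u12 u21 u22 \<and> type_mult s (type_inv t) = \<alpha> \<and>
     a = sesq_form 1 0 (- 1) u11 u12 u11 u12 \<and> b = sesq_form 1 0 (- 1) u11 u12 u21 u22 \<and>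
     d = sesq_form 1 0 (- 1) u21 u22 u21 u22)"

lemma J_factorable_congruence:
  assumes "J_factorable a b d \<alpha>" "sym_rows \<alpha> s t x1 x2 y1 y2"
  shows "J_factorable (sesq_form a b d x1 x2 x1 x2) (sesq_form a b d x1 x2 y1 y2)
           (sesq_form a b d y1 y2 y1 y2) (type_mult s (type_inv t))"
proof -
  obtain u11 u12 u21 u22 \<beta> s' t' where U: "sym_rows \<beta> s' t' u11 u12 u21 u22"
    "type_mult s' (type_inv t') = \<alpha>" and a: "a = sesq_form 1 0 (- 1) u11 u12 u11 u12"
    and b: "b = sesq_form 1 0 (- 1) u11 u12 u21 u22" and d: "d = sesq_form 1 0 (- 1) u21 u22 u21 u22"
    using assms(1) unfolding J_factorable_def by blast
  obtain es cs et ct eb cb es' cs' et' ct' where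
    \<tau>: "s = (es, cs)" "t = (et, ct)" "\<beta> = (eb, cb)" "s' = (es', cs')" "t' = (et', ct')"
    by (metis surj_pair)
  have x: "lsym x1 s" "lsym x2 (type_mult \<alpha> s)" "lsym y1 t" "lsym y2 (type_mult \<alpha> t)"
    and u: "lsym u11 s'" "lsym u12 (type_mult \<beta> s')" "lsym u21 t'" "lsym u22 (type_mult \<beta> t')"
    using assms(2) U(1) by (simp_all add: sym_rows_def)
  have signs: "es = 1 \<or> es = -1" "et = 1 \<or> et = -1" "eb = 1 \<or> eb = -1"
    "es' = 1 \<or> es' = -1" "et' = 1 \<or> et' = -1"
    using sym_rows_valid[OF assms(2)] sym_rows_valid[OF U(1)] by (simp_all add: \<tau>)
  define p1 where "p1 = x1 * u11 + x2 * u21"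
  define p2 where "p2 = x1 * u12 + x2 * u22"
  define q1 where "q1 = y1 * u11 + y2 * u21"
  define q2 where "q2 = y1 * u12 + y2 * u22"
  have "sym_rows \<beta> (type_mult s s') (type_mult t s') p1 p2 q1 q2"
    unfolding sym_rows_def p1_def p2_def q1_def q2_def
    by (intro conjI lsym_add lsym_mult_eq[OF x(1) u(1)] lsym_mult_eq[OF x(2) u(3)]
        lsym_mult_eq[OF x(1) u(2)] lsym_mult_eq[OF x(2) u(4)] lsym_mult_eq[OF x(3) u(1)]
        lsym_mult_eq[OF x(4) u(3)] lsym_mult_eq[OF x(3) u(2)] lsym_mult_eq[OF x(4) u(4)])
      (use signs in \<open>auto simp: \<tau> U(2)[symmetric] type_mult_def type_inv_def\<close>)
  moreover have "type_mult (type_mult s s') (type_inv (type_mult t s')) = type_mult s (type_inv t)"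
    using signs by (auto simp: \<tau> type_mult_def type_inv_def)
  moreover have "lstar 1 = 1" "lstar (- 1) = - 1"
    by (simp_all add: lstar_simps)
  note compose = sesq_form_compose[OF this, of 0 u11 u12 u21 u22]
  ultimately show ?thesis
    unfolding J_factorable_def a b d compose p1_def p2_def q1_def q2_def by blast
qed

definition lunit :: "lpm \<Rightarrow> bool" where
  "lunit p \<longleftrightarrow> (\<exists>k c. c \<noteq> 0 \<and> p = lmonom k c)"

lemma lunit_monom: "c \<noteq> 0 \<Longrightarrow> lunit (lmonom k c)"
  unfolding lunit_def by blast

lemma lunit_uminus:
  assumes "lunit p"
  shows "lunit (- p)"
proof -
  obtain k c where "c \<noteq> 0" "p = lmonom k c" using assms unfolding lunit_def by blast
  then show ?thesis using lunit_monom[of "- c" k] by (simp add: single_uminus)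
qed

text \<open>A factorization of \<open>E M E\<^sup>\<star>\<close> gives one of \<open>M\<close> by multiplying with \<open>E\<^sup>-\<^sup>1\<close>, which is a
  Laurent polynomial matrix because \<open>det E\<close> is a unit.\<close>
lemma J_factorable_of_congruent:
  assumes herm: "lstar a = a" "lstar d = d" and \<alpha>: "fst \<alpha> = 1 \<or> fst \<alpha> = -1"
    and E: "sym_rows \<alpha> s t x1 x2 y1 y2" "lunit (x1 * y2 - x2 * y1)"
    and F: "J_factorable (sesq_form a b d x1 x2 x1 x2) (sesq_form a b d x1 x2 y1 y2)
              (sesq_form a b d y1 y2 y1 y2) (type_mult s (type_inv t))"
  shows "J_factorable a b d \<alpha>"
proof -
  obtain k c where det: "x1 * y2 - x2 * y1 = lmonom k c" and "c \<noteq> 0"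
    using E(2) unfolding lunit_def by blast
  define g where "g = lmonom (- k) (1 / c)"
  have g: "g * (x1 * y2 - x2 * y1) = 1"
    using \<open>c \<noteq> 0\<close> by (simp add: det g_def mult_single)
  have inverse_rows: "g * y2 * x1 + - (g * x2) * y1 = 1" "g * y2 * x2 + - (g * x2) * y2 = 0"
    "- (g * y1) * x1 + g * x1 * y1 = 0" "- (g * y1) * x2 + g * x1 * y2 = 1"
    using g by (simp_all add: algebra_simps)
  obtain es cs et ct e c' where \<tau>: "s = (es, cs)" "t = (et, ct)" "\<alpha> = (e, c')"
    by (metis surj_pair)
  have x: "lsym x1 s" "lsym x2 (type_mult \<alpha> s)" "lsym y1 t" "lsym y2 (type_mult \<alpha> t)"
    using E(1) by (simp_all add: sym_rows_def)
  have signs: "es = 1 \<or> es = -1" "et = 1 \<or> et = -1" "e = 1 \<or> e = -1"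
    using sym_rows_valid[OF E(1)] \<alpha> by (simp_all add: \<tau>)
  have "lsym g (1, - 2 * k)"
    using lsym_monom[of "- k"] by (simp add: g_def)
  then have "sym_rows (type_mult s (type_inv t)) (type_mult (1, - 2 * k) (type_mult \<alpha> t))
      (type_mult (1, - 2 * k) t) (g * y2) (- (g * x2)) (- (g * y1)) (g * x1)"
    unfolding sym_rows_def
    by (intro conjI lsym_uminus lsym_mult_eq[OF _ x(4)] lsym_mult_eq[OF _ x(2)]
        lsym_mult_eq[OF _ x(3)] lsym_mult_eq[OF _ x(1)])
      (use signs in \<open>auto simp: \<tau> type_mult_def type_inv_def\<close>)
  from J_factorable_congruence[OF F this]
  have "J_factorable a b d (type_mult (type_mult (1, - 2 * k) (type_mult \<alpha> t))
      (type_inv (type_mult (1, - 2 * k) t)))"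
    unfolding sesq_form_compose[OF herm] inverse_rows sesq_form_unit_rows .
  moreover have "type_mult (type_mult (1, - 2 * k) (type_mult \<alpha> t))
      (type_inv (type_mult (1, - 2 * k) t)) = \<alpha>"
    using signs by (auto simp: \<tau> type_mult_def type_inv_def)
  ultimately show ?thesis by simp
qed

definition neg_det_hermitian :: "lpm \<Rightarrow> lpm \<Rightarrow> lpm \<Rightarrow> symtype \<Rightarrow> real \<Rightarrow> bool" where
  "neg_det_hermitian a b d \<alpha> C \<longleftrightarrow> C < 0 \<and> lstar a = a \<and> lstar d = d \<and>
     lsym a (1, 0) \<and> lsym d (1, 0) \<and> lsym b \<alpha> \<and> a * d - b * lstar b = lmonom 0 (of_real C)"

lemma neg_det_hermitian_congruence:
  assumes H: "neg_det_hermitian a b d \<alpha> C"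
    and E: "sym_rows \<alpha> s t x1 x2 y1 y2" "lunit (x1 * y2 - x2 * y1)"
  shows "\<exists>C'. neg_det_hermitian (sesq_form a b d x1 x2 x1 x2) (sesq_form a b d x1 x2 y1 y2)
           (sesq_form a b d y1 y2 y1 y2) (type_mult s (type_inv t)) C'"
proof -
  have C: "C < 0" and herm: "lstar a = a" "lstar d = d" and sym: "lsym a (1, 0)" "lsym b \<alpha>" "lsym d (1, 0)"
    and det: "a * d - b * lstar b = lmonom 0 (of_real C)"
    using H by (simp_all add: neg_det_hermitian_def)
  obtain k c where detE: "x1 * y2 - x2 * y1 = lmonom k c" and "c \<noteq> 0"
    using E(2) unfolding lunit_def by blast
  have "lsym x1 s" "lsym y1 t"
    using E(1) by (simp_all add: sym_rows_def)
  then have "type_mult s (type_inv s) = (1, 0)" "type_mult t (type_inv t) = (1, 0)"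
    by (simp_all add: type_mult_inv_self lsym_valid)
  then have "lsym (sesq_form a b d x1 x2 x1 x2) (1, 0)" "lsym (sesq_form a b d y1 y2 y1 y2) (1, 0)"
    using lsym_sesq_form[OF sym, of s s x1 x2 x1 x2] lsym_sesq_form[OF sym, of t t y1 y2 y1 y2] E(1)
    by (simp_all add: sym_rows_def)
  moreover have "lsym (sesq_form a b d x1 x2 y1 y2) (type_mult s (type_inv t))"
    by (rule lsym_sesq_form[OF sym E(1)])
  moreover have "sesq_form a b d x1 x2 x1 x2 * sesq_form a b d y1 y2 y1 y2
      - sesq_form a b d x1 x2 y1 y2 * lstar (sesq_form a b d x1 x2 y1 y2)
      = lmonom 0 (of_real ((cmod c)\<^sup>2 * C))"
    unfolding sesq_form_det[OF herm] detE det
    by (simp add: lstar_monom mult_single flip: complex_norm_square)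
  moreover have "(cmod c)\<^sup>2 * C < 0"
    using C \<open>c \<noteq> 0\<close> by (simp add: mult_pos_neg)
  ultimately show ?thesis
    using herm by (auto simp: neg_det_hermitian_def lstar_sesq_form)
qed

lemma shear_rows:
  assumes "lsym f \<alpha>"
  shows "sym_rows \<alpha> (1, 0) (type_inv \<alpha>) 1 f 0 1" "lunit (1 * 1 - f * 0)"
proof -
  have "fst \<alpha> = 1 \<or> fst \<alpha> = -1" by (rule lsym_valid[OF assms])
  then show "sym_rows \<alpha> (1, 0) (type_inv \<alpha>) 1 f 0 1"
    using assms by (auto simp: sym_rows_def type_mult_inv_self type_mult_def type_inv_def
        intro: lsym_one lsym_zero)
  show "lunit (1 * 1 - f * 0)"
    using lunit_monom[of 1 0] by simp
qed

section \<open>Matrices with constant lower right entry\<close>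

lemma lmonom_0_real_mult: "lmonom 0 (of_real x) * lmonom 0 (of_real y) = lmonom 0 (of_real (x * y))"
  by (simp add: mult_single)

lemma J_factorable_const_diagonal:
  assumes "c1 * c2 < 0" and \<alpha>: "fst \<alpha> = 1 \<or> fst \<alpha> = -1"
  shows "J_factorable (lmonom 0 (of_real c1)) 0 (lmonom 0 (of_real c2)) \<alpha>"
proof (cases "c1 > 0")
  case True
  then have "c2 < 0" using assms(1) by (simp add: mult_less_0_iff)
  define u11 where "u11 = lmonom 0 (of_real (sqrt c1))"
  define u22 where "u22 = lmonom 0 (of_real (sqrt (- c2)))"
  have "sym_rows \<alpha> (1, 0) (type_inv \<alpha>) u11 0 0 u22"
    using lsym_monom[of 0] \<alpha> by (simp add: sym_rows_def u11_def u22_def type_mult_inv_self lsym_zero)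
      (auto simp: type_mult_def type_inv_def intro: lsym_zero)
  moreover have "type_mult (1, 0) (type_inv (type_inv \<alpha>)) = \<alpha>"
    by (simp add: type_mult_def type_inv_def)
  moreover have "lmonom 0 (of_real c1) = sesq_form 1 0 (- 1) u11 0 u11 0"
    "0 = sesq_form 1 0 (- 1) u11 0 0 u22" "lmonom 0 (of_real c2) = sesq_form 1 0 (- 1) 0 u22 0 u22"
    using True \<open>c2 < 0\<close>
    by (simp_all add: sesq_form_J u11_def u22_def lstar_monom lstar_zero lmonom_0_real_mult
        flip: single_uminus)
  ultimately show ?thesis
    unfolding J_factorable_def by blast
next
  case False
  then have "c1 < 0" "c2 > 0" using assms(1) by (auto simp: mult_less_0_iff)
  define u12 where "u12 = lmonom 0 (of_real (sqrt (- c1)))"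
  define u21 where "u21 = lmonom 0 (of_real (sqrt c2))"
  have "sym_rows (type_inv \<alpha>) \<alpha> (1, 0) 0 u12 u21 0"
    using lsym_monom[of 0] \<alpha> by (simp add: sym_rows_def u12_def u21_def lsym_zero)
      (auto simp: type_mult_def type_inv_def intro: lsym_zero)
  moreover have "type_mult \<alpha> (type_inv (1, 0)) = \<alpha>"
    by (simp add: type_mult_def type_inv_def)
  moreover have "lmonom 0 (of_real c1) = sesq_form 1 0 (- 1) 0 u12 0 u12"
    "0 = sesq_form 1 0 (- 1) 0 u12 u21 0" "lmonom 0 (of_real c2) = sesq_form 1 0 (- 1) u21 0 u21 0"
    using \<open>c1 < 0\<close> \<open>c2 > 0\<close>
    by (simp_all add: sesq_form_J u12_def u21_def lstar_monom lstar_zero lmonom_0_real_mult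
        flip: single_uminus)
  ultimately show ?thesis
    unfolding J_factorable_def by blast
qed

text \<open>If \<open>d = 0\<close> then \<open>[[a, b], [b\<^sup>\<star>, 0]] = U J U\<^sup>\<star>\<close> for \<open>U = [[(a + 1)/2, (a - 1)/2], [b\<^sup>\<star>, b\<^sup>\<star>]]\<close>.\<close>
lemma J_factorable_zero_corner:
  assumes "lstar a = a" "lsym a (1, 0)" "lsym b \<alpha>"
  shows "J_factorable a b 0 \<alpha>"
proof -
  define h where "h = lmonom 0 (1 / 2)"
  have h: "lstar h = h" "h + h = 1"
    by (simp_all add: h_def lstar_monom flip: single_add)
  have "sym_rows (1, 0) (1, 0) (type_inv \<alpha>) (h * (a + 1)) (h * (a - 1)) (lstar b) (lstar b)"
    using assms(2,3) lsym_lstar[OF assms(3)] lsym_valid[OF assms(3)]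
    by (auto simp: sym_rows_def h_def type_mult_def type_inv_def
        intro!: lsym_const_mult lsym_add lsym_diff lsym_one)
  moreover have "type_mult (1, 0) (type_inv (type_inv \<alpha>)) = \<alpha>"
    by (simp add: type_mult_def type_inv_def)
  moreover have "a = sesq_form 1 0 (- 1) (h * (a + 1)) (h * (a - 1)) (h * (a + 1)) (h * (a - 1))"
  proof -
    have "sesq_form 1 0 (- 1) (h * (a + 1)) (h * (a - 1)) (h * (a + 1)) (h * (a - 1))
        = (h + h) * (h + h) * a"
      using assms(1) h(1) by (simp add: sesq_form_J lstar_simps algebra_simps)
    then show ?thesis by (simp add: h(2))
  qed
  moreover have "b = sesq_form 1 0 (- 1) (h * (a + 1)) (h * (a - 1)) (lstar b) (lstar b)"
  proof -
    have "sesq_form 1 0 (- 1) (h * (a + 1)) (h * (a - 1)) (lstar b) (lstar b) = (h + h) * b"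
      by (simp add: sesq_form_J lstar_lstar algebra_simps)
    then show ?thesis by (simp add: h(2))
  qed
  moreover have "0 = sesq_form 1 0 (- 1) (lstar b) (lstar b) (lstar b) (lstar b)"
    by (simp add: sesq_form_J)
  ultimately show ?thesis
    unfolding J_factorable_def by blast
qed

lemma shear_diagonalizes:
  assumes "r \<noteq> 0" and det: "a * lmonom 0 (of_real r) - b * lstar b = lmonom 0 (of_real C)"
  defines "f \<equiv> lmonom 0 (of_real (- 1 / r)) * b"
  shows "sesq_form a b (lmonom 0 (of_real r)) 1 f 1 f = lmonom 0 (of_real (C / r))"
    and "sesq_form a b (lmonom 0 (of_real r)) 1 f 0 1 = 0"
proof -
  define R where "R = lmonom 0 (of_real (- 1 / r))"
  define D where "D = lmonom 0 (of_real r)"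
  have "R * D = lmonom 0 (of_real (- 1 / r * r))"
    by (simp add: R_def D_def mult_single)
  then have RD: "R * D = - 1"
    using assms(1) by (simp add: single_uminus)
  have "- (R * lmonom 0 (of_real C)) = lmonom 0 (- (of_real (- 1 / r) * of_real C))"
    by (simp add: R_def mult_single single_uminus)
  then have RC: "- (R * lmonom 0 (of_real C)) = lmonom 0 (of_real (C / r))"
    by simp
  have "lstar R = R" "lstar 1 = 1"
    by (simp_all add: R_def lstar_simps)
  then have "sesq_form a b D 1 (R * b) 1 (R * b) = a + (R + R + R * (R * D)) * (b * lstar b)"
    by (simp add: sesq_form_def lstar_mult D_def[symmetric] algebra_simps)
  also have "\<dots> = a + R * (a * D - lmonom 0 (of_real C))"
  proof -
    have "R + R + R * (R * D) = R" by (simp add: RD)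
    moreover have "b * lstar b = a * D - lmonom 0 (of_real C)"
      using det by (simp add: D_def algebra_simps)
    ultimately show ?thesis by (simp only:)
  qed
  also have "\<dots> = (1 + R * D) * a + - (R * lmonom 0 (of_real C))"
    by (simp add: algebra_simps)
  finally have "sesq_form a b D 1 (R * b) 1 (R * b) = lmonom 0 (of_real (C / r))"
    by (simp add: RD RC)
  then show "sesq_form a b (lmonom 0 (of_real r)) 1 f 1 f = lmonom 0 (of_real (C / r))"
    unfolding f_def R_def D_def .
  have "sesq_form a b D 1 (R * b) 0 1 = (1 + R * D) * b"
    by (simp add: sesq_form_def lstar_simps algebra_simps)
  then have "sesq_form a b D 1 (R * b) 0 1 = 0"
    by (simp add: RD)
  then show "sesq_form a b (lmonom 0 (of_real r)) 1 f 0 1 = 0"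
    unfolding f_def R_def D_def .
qed

lemma J_factorable_if_ldeg_eq_0:
  assumes H: "neg_det_hermitian a b d \<alpha> C" and "ldeg d = 0"
  shows "J_factorable a b d \<alpha>"
proof -
  have C: "C < 0" and herm: "lstar a = a" "lstar d = d" and sym: "lsym a (1, 0)" "lsym b \<alpha>" "lsym d (1, 0)"
    and det: "a * d - b * lstar b = lmonom 0 (of_real C)"
    using H by (simp_all add: neg_det_hermitian_def)
  have \<alpha>: "fst \<alpha> = 1 \<or> fst \<alpha> = -1" by (rule lsym_valid[OF sym(2)])
  define r where "r = Re (lcoeff d 0)"
  have "lcoeff d 0 = of_real r"
    using lcoeff_real_if_hermitian[OF herm(2) sym(3)] unfolding r_def by (metis Reals_cnj_iff of_real_Re)
  then have d: "d = lmonom 0 (of_real r)"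
    using ldeg_eq_0_imp_const[OF sym(3) \<open>ldeg d = 0\<close>] by simp
  show ?thesis
  proof (cases "r = 0")
    case True
    then show ?thesis using J_factorable_zero_corner[OF herm(1) sym(1,2)] d by simp
  next
    case False
    define f where "f = lmonom 0 (of_real (- 1 / r)) * b"
    have "C / r * r < 0"
      using C False by simp
    then have "J_factorable (sesq_form a b d 1 f 1 f) (sesq_form a b d 1 f 0 1)
        (sesq_form a b d 0 1 0 1) (type_mult (1, 0) (type_inv (type_inv \<alpha>)))"
      using J_factorable_const_diagonal[OF _ \<alpha>, of "C / r" r] shear_diagonalizes[OF False, of a b C] det
      by (simp add: sesq_form_unit_rows d f_def type_mult_def type_inv_def)
    moreover have "lsym f \<alpha>"
      unfolding f_def by (rule lsym_const_mult[OF sym(2)])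
    ultimately show ?thesis
      using J_factorable_of_congruent[OF herm \<alpha> shear_rows] by blast
  qed
qed

section \<open>Top coefficients\<close>

lemma lsym_support_bounds:
  assumes "lsym b \<alpha>" "b \<noteq> 0"
  obtains hi where "lcoeff b hi \<noteq> 0" "\<forall>k>hi. lcoeff b k = 0" "\<forall>k<snd \<alpha> - hi. lcoeff b k = 0"
proof
  define hi where "hi = Max (lsupp b)"
  have ne: "lsupp b \<noteq> {}" using assms(2) keys_eq_empty by blast
  show top: "lcoeff b hi \<noteq> 0"
    unfolding hi_def using Max_in[OF finite_keys ne] by (simp add: in_keys_iff)
  show above: "\<forall>k>hi. lcoeff b k = 0"
    unfolding hi_def by (meson Max_ge finite_keys in_keys_iff leD)
  show "\<forall>k<snd \<alpha> - hi. lcoeff b k = 0"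
  proof (intro allI impI)
    fix k assume "k < snd \<alpha> - hi"
    then show "lcoeff b k = 0"
      using lsym_lcoeff[OF assms(1), of k] above[rule_format, of "snd \<alpha> - k"] by simp
  qed
qed

lemma lcoeff_mult_lstar_top:
  assumes "\<forall>k>hi. lcoeff b k = 0" "\<forall>k<m - hi. lcoeff b k = 0"
  shows "n > 2 * hi - m \<Longrightarrow> lcoeff (b * lstar b) n = 0"
    and "lcoeff (b * lstar b) (2 * hi - m) = lcoeff b hi * cnj (lcoeff b (m - hi))"
    and "lcoeff (b * lstar b) (2 * hi - m - 1)
           = lcoeff b hi * cnj (lcoeff b (m - hi + 1)) + lcoeff b (hi - 1) * cnj (lcoeff b (m - hi))"
proof -
  have P: "\<And>k. k > hi \<Longrightarrow> lcoeff b k = 0" and Q: "\<And>k. k > hi - m \<Longrightarrow> lcoeff (lstar b) k = 0"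
    using assms by (simp_all add: lcoeff_lstar)
  note top = lcoeff_mult_top[of hi b "hi - m" "lstar b", OF P Q]
  show "n > 2 * hi - m \<Longrightarrow> lcoeff (b * lstar b) n = 0" using top(1)[of n] by simp
  show "lcoeff (b * lstar b) (2 * hi - m) = lcoeff b hi * cnj (lcoeff b (m - hi))"
    using top(2) by (simp add: lcoeff_lstar algebra_simps)
  show "lcoeff (b * lstar b) (2 * hi - m - 1)
      = lcoeff b hi * cnj (lcoeff b (m - hi + 1)) + lcoeff b (hi - 1) * cnj (lcoeff b (m - hi))"
    using top(3) by (simp add: lcoeff_lstar algebra_simps)
qed

lemma lcoeff_mult_ldeg_top:
  shows "n > int (ldeg a) + int (ldeg d) \<Longrightarrow> lcoeff (a * d) n = 0"
    and "lcoeff (a * d) (int (ldeg a) + int (ldeg d)) = lcoeff a (ldeg a) * lcoeff d (ldeg d)"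
    and "lcoeff (a * d) (int (ldeg a) + int (ldeg d) - 1)
           = lcoeff a (ldeg a) * lcoeff d (int (ldeg d) - 1) + lcoeff a (int (ldeg a) - 1) * lcoeff d (ldeg d)"
  using lcoeff_mult_top[of "int (ldeg a)" a "int (ldeg d)" d, OF lcoeff_above_ldeg lcoeff_above_ldeg]
  by auto

lemma neg_det_hermitian_lcoeff:
  "neg_det_hermitian a b d \<alpha> C \<Longrightarrow> n \<noteq> 0 \<Longrightarrow> lcoeff (a * d) n = lcoeff (b * lstar b) n"
  unfolding neg_det_hermitian_def by (metis lcoeff_diff lcoeff_monom eq_iff_diff_eq_0)

lemma neg_det_hermitian_ldeg_le:
  assumes H: "neg_det_hermitian a b d \<alpha> C" and "a \<noteq> 0" "1 \<le> ldeg d"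
    and "\<forall>k>h. lcoeff b k = 0" "\<forall>k<snd \<alpha> - h. lcoeff b k = 0"
  shows "int (ldeg a) + int (ldeg d) \<le> 2 * h - snd \<alpha>"
proof (rule ccontr)
  assume "\<not> ?thesis"
  then have "lcoeff (b * lstar b) (int (ldeg a) + int (ldeg d)) = 0"
    using lcoeff_mult_lstar_top(1)[OF assms(4,5)] by simp
  moreover have "lsym a (1, 0)" "lsym d (1, 0)"
    using H by (simp_all add: neg_det_hermitian_def)
  then have "lcoeff (a * d) (int (ldeg a) + int (ldeg d)) \<noteq> 0"
    using assms(2,3) lcoeff_mult_ldeg_top(2) lcoeff_ldeg_neq_0 by fastforce
  moreover have "int (ldeg a) + int (ldeg d) \<noteq> 0"
    using assms(3) by simp
  ultimately show False
    using neg_det_hermitian_lcoeff[OF H] by metis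
qed

text \<open>Comparing top coefficients in \<open>a d - b b\<^sup>\<star> = C\<close> locates the support of \<open>b\<close>.\<close>
lemma neg_det_hermitian_support_b:
  assumes H: "neg_det_hermitian a b d \<alpha> C" and "ldeg a \<ge> 1" "ldeg d \<ge> 1"
  obtains hi where "lcoeff b hi \<noteq> 0" "\<forall>k>hi. lcoeff b k = 0" "\<forall>k<snd \<alpha> - hi. lcoeff b k = 0"
    "2 * hi - snd \<alpha> = int (ldeg a) + int (ldeg d)"
proof -
  have sa: "lsym a (1,0)" and sd: "lsym d (1,0)" and sb: "lsym b \<alpha>"
    using H by (auto simp: neg_det_hermitian_def)
  define n where "n = int (ldeg a) + int (ldeg d)"
  have "n \<noteq> 0" using assms(2,3) by (simp add: n_def)
  have "a \<noteq> 0" "d \<noteq> 0" using assms(2,3) by auto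
  then have "lcoeff (a * d) n \<noteq> 0"
    using lcoeff_mult_ldeg_top(2) lcoeff_ldeg_neq_0[OF sa] lcoeff_ldeg_neq_0[OF sd] by (simp add: n_def)
  then have "b \<noteq> 0"
    using neg_det_hermitian_lcoeff[OF H \<open>n \<noteq> 0\<close>] by auto
  then obtain hi where hi: "lcoeff b hi \<noteq> 0" "\<forall>k>hi. lcoeff b k = 0" "\<forall>k<snd \<alpha> - hi. lcoeff b k = 0"
    using lsym_support_bounds[OF sb] by blast
  have "lcoeff b (snd \<alpha> - hi) \<noteq> 0"
    using lsym_lcoeff[OF sb, of hi] hi(1) by auto
  then have "lcoeff (b * lstar b) (2 * hi - snd \<alpha>) \<noteq> 0"
    using lcoeff_mult_lstar_top(2)[OF hi(2,3)] hi(1) by simp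
  have "2 * hi - snd \<alpha> \<le> n"
  proof (rule ccontr)
    assume "\<not> 2 * hi - snd \<alpha> \<le> n"
    then have "lcoeff (a * d) (2 * hi - snd \<alpha>) = 0" "2 * hi - snd \<alpha> \<noteq> 0"
      using lcoeff_mult_ldeg_top(1)[where n = "2 * hi - snd \<alpha>"] \<open>n \<noteq> 0\<close> assms(2,3)
      by (auto simp: n_def)
    then show False
      using neg_det_hermitian_lcoeff[OF H] \<open>lcoeff (b * lstar b) (2 * hi - snd \<alpha>) \<noteq> 0\<close> by metis
  qed
  moreover have "n \<le> 2 * hi - snd \<alpha>"
    using neg_det_hermitian_ldeg_le[OF H \<open>a \<noteq> 0\<close> assms(3) hi(2,3)] by (simp add: n_def)
  ultimately have "2 * hi - snd \<alpha> = int (ldeg a) + int (ldeg d)"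
    unfolding n_def by linarith
  then show thesis by (rule that[OF hi])
qed

section \<open>Lowering the degree\<close>

lemma ldeg_shear_less:
  assumes H: "neg_det_hermitian a b d \<alpha> C" and "1 \<le> ldeg d" "ldeg d \<le> ldeg a" and f: "lsym f \<alpha>"
    and top: "\<forall>k\<ge>hi. lcoeff (b + f * d) k = 0"
    and hi: "2 * hi - snd \<alpha> = int (ldeg a) + int (ldeg d)"
  shows "ldeg (sesq_form a b d 1 f 1 f) < ldeg a"
proof -
  define b' where "b' = sesq_form a b d 1 f 0 1"
  have b': "b' = b + f * d" by (simp add: b'_def sesq_form_def lstar_simps)
  have "type_mult (1, 0) (type_inv (type_inv \<alpha>)) = \<alpha>"
    by (simp add: type_mult_def type_inv_def)
  then obtain C' where H': "neg_det_hermitian (sesq_form a b d 1 f 1 f) b' d \<alpha> C'"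
    using neg_det_hermitian_congruence[OF H shear_rows[OF f]]
    unfolding b'_def sesq_form_unit_rows by metis
  have up: "\<forall>k > hi - 1. lcoeff b' k = 0"
    using top b' by simp
  have "lsym b' \<alpha>" using H' by (simp add: neg_det_hermitian_def)
  have low: "\<forall>k < snd \<alpha> - (hi - 1). lcoeff b' k = 0"
  proof (intro allI impI)
    fix k assume "k < snd \<alpha> - (hi - 1)"
    then show "lcoeff b' k = 0"
      using lsym_lcoeff[OF \<open>lsym b' \<alpha>\<close>, of k] up[rule_format, of "snd \<alpha> - k"] by simp
  qed
  show ?thesis
  proof (cases "sesq_form a b d 1 f 1 f = 0")
    case False
    have "int (ldeg (sesq_form a b d 1 f 1 f)) + int (ldeg d) \<le> 2 * (hi - 1) - snd \<alpha>"
      by (rule neg_det_hermitian_ldeg_le[OF H' False assms(2) up low])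
    moreover have "2 * (hi - 1) - snd \<alpha> = int (ldeg a) + int (ldeg d) - 2" using hi by simp
    ultimately show ?thesis by simp
  qed (use assms(2,3) in simp)
qed

text \<open>With \<open>\<alpha> = (e, m)\<close>, the shear by \<open>f = \<kappa> z\<^sup>j + e \<kappa> z\<^sup>m\<^sup>-\<^sup>j\<close> cancels the top coefficient of
  \<open>b + f d\<close>. When \<open>deg a = deg d\<close> both monomials of \<open>f\<close> contribute to it, which is why \<open>e = 1\<close> is
  needed there.\<close>
lemma shear_lowers_ldeg:
  assumes H: "neg_det_hermitian a b d \<alpha> C" and "1 \<le> ldeg d" "ldeg d \<le> ldeg a"
    and np: "\<not> (ldeg a = ldeg d \<and> fst \<alpha> = -1)"
  obtains f where "lsym f \<alpha>" "ldeg (sesq_form a b d 1 f 1 f) < ldeg a"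
proof -
  have yb: "lsym b \<alpha>" and yd: "lsym d (1, 0)"
    using H by (simp_all add: neg_det_hermitian_def)
  obtain e m where al: "\<alpha> = (e, m)" by fastforce
  have va: "e = 1 \<or> e = -1" using lsym_valid[OF yb] al by simp
  define p where "p = int (ldeg a)"
  define q where "q = int (ldeg d)"
  have pq: "1 \<le> q" "q \<le> p" using assms(2,3) by (auto simp: p_def q_def)
  have "1 \<le> ldeg a" using assms(2,3) by simp
  then obtain hi where "lcoeff b hi \<noteq> 0" "\<forall>k>hi. lcoeff b k = 0"
    and hi: "2 * hi - snd \<alpha> = int (ldeg a) + int (ldeg d)"
    using neg_det_hermitian_support_b[OF H _ assms(2)] by metis
  then have h: "lcoeff b hi \<noteq> 0" "\<forall>k>hi. lcoeff b k = 0" "2 * hi - m = p + q"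
    by (simp_all add: al p_def q_def)
  have Dq: "lcoeff d q \<noteq> 0" using lcoeff_ldeg_neq_0[OF yd] assms(2) q_def by fastforce
  have dq: "lcoeff d k = 0" if "k > q" for k using lcoeff_above_ldeg that q_def by simp
  define j where "j = hi - q"
  define \<kappa> where "\<kappa> = - lcoeff b hi / (lcoeff d q * (if p = q then 2 else 1))"
  define f where "f = lmonom j \<kappa> + lmonom (m - j) (of_int e * \<kappa>)"
  have yf: "lsym f \<alpha>"
  proof (rule lsymI)
    show "fst \<alpha> = 1 \<or> fst \<alpha> = -1" using va al by simp
    show "lcoeff f k = of_int (fst \<alpha>) * lcoeff f (snd \<alpha> - k)" for k
      using va by (auto simp: f_def lcoeff_add lcoeff_monom al algebra_simps)
  qed
  have cb': "lcoeff (b + f * d) k = lcoeff b k + \<kappa> * lcoeff d (k - j) + of_int e * \<kappa> * lcoeff d (k - (m - j))" for k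
    by (simp add: f_def distrib_right lcoeff_add lcoeff_monom_mult)
  have "lcoeff (b + f * d) k = 0" if "k \<ge> hi" for k
  proof (cases "k = hi")
    case True
    have "hi - (m - j) = p" using h(3) by (simp add: j_def)
    then have "lcoeff d (hi - (m - j)) = (if p = q then lcoeff d q else 0)"
      using dq[of p] pq by auto
    moreover have "p = q \<Longrightarrow> e = 1" using np va p_def q_def al by auto
    ultimately show ?thesis using True Dq
      unfolding cb' by (simp add: j_def \<kappa>_def field_simps split: if_splits)
  next
    case False
    then have "k > hi" using that by simp
    then show ?thesis
      using h(2) dq[of "k - j"] dq[of "k - (m - j)"] pq h(3) unfolding cb' by (simp add: j_def)
  qed
  then show thesis
    using that yf ldeg_shear_less[OF H assms(2,3) yf _ hi] by blast
qed

lemma twist_parameter: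
  fixes x D B B1 a1 d1 :: complex
  assumes "cnj x = x" "x \<noteq> 0" "D \<noteq> 0" "x * D = - (B * cnj B)"
    and "x * d1 + a1 * D = - (B * cnj B1) - B1 * cnj B"
  defines "t \<equiv> - x / cnj B"
  shows "t \<noteq> 0"
    and "x + cnj t * B + t * cnj B - t * cnj t * D = 0"
    and "x + t * cnj t * D = 0"
    and "a1 + cnj t * B1 + t * cnj B1 - t * cnj t * d1 = 0"
proof -
  have "B \<noteq> 0" "cnj B \<noteq> 0" using assms(2-4) by auto
  have ct: "cnj t = - x / B" unfolding t_def using assms(1) by simp
  have D: "D = - (B * cnj B) / x" using assms(2,4) by (simp add: field_simps)
  show "t \<noteq> 0" using assms(2) \<open>cnj B \<noteq> 0\<close> by (simp add: t_def)
  show "x + cnj t * B + t * cnj B - t * cnj t * D = 0" "x + t * cnj t * D = 0"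
    unfolding ct D using \<open>B \<noteq> 0\<close> assms(2) by (simp_all add: t_def field_simps)
  have "a1 * (B * cnj B) - x * B1 * cnj B - x * cnj B1 * B - x * x * d1
      = - x * (x * d1 + a1 * D + B * cnj B1 + B1 * cnj B) + a1 * (x * D + B * cnj B)"
    by (simp add: algebra_simps)
  also have "\<dots> = 0" using assms(4,5) by simp
  finally show "a1 + cnj t * B1 + t * cnj B1 - t * cnj t * d1 = 0"
    unfolding ct using \<open>B \<noteq> 0\<close> \<open>cnj B \<noteq> 0\<close> by (simp add: t_def field_simps)
qed

lemma twist_expand:
  fixes a b bs d z zi m mc t :: "'a::comm_ring_1"
  assumes "z * zi = 1" "m * mc = t"
  shows "(1 + z) * a * (1 + zi) + (1 + z) * b * (mc * (1 - zi)) + m * (1 - z) * bs * (1 + zi)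
      + m * (1 - z) * d * (mc * (1 - zi))
    = a + a + z * a + zi * a + mc * (z * b) - mc * (zi * b) + m * (zi * bs) - m * (z * bs)
      + t * d + t * d - t * (z * d) - t * (zi * d)"
proof -
  have "(1 + z) * a * (1 + zi) + (1 + z) * b * (mc * (1 - zi)) + m * (1 - z) * bs * (1 + zi)
      + m * (1 - z) * d * (mc * (1 - zi))
    = a * (1 + z + zi + z * zi) + mc * b * (z - zi + 1 - z * zi) + m * bs * (1 + zi - z - z * zi)
      + (m * mc) * d * (1 - z - zi + z * zi)"
    by (simp add: algebra_simps)
  then show ?thesis
    unfolding assms by (simp add: algebra_simps)
qed

lemma lcoeff_twist_form:
  assumes "\<sigma> = 1 \<or> \<sigma> = -1"
  shows "lcoeff (sesq_form a b d (1 + lmonom 1 \<sigma>) (lmonom h t * (1 - lmonom 1 \<sigma>))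
                              (1 + lmonom 1 \<sigma>) (lmonom h t * (1 - lmonom 1 \<sigma>))) k
    = 2 * lcoeff a k + \<sigma> * (lcoeff a (k - 1) + lcoeff a (k + 1))
      + \<sigma> * cnj t * (lcoeff b (k + h - 1) - lcoeff b (k + h + 1))
      + \<sigma> * t * (cnj (lcoeff b (h - k - 1)) - cnj (lcoeff b (h - k + 1)))
      + t * cnj t * (2 * lcoeff d k - \<sigma> * (lcoeff d (k - 1) + lcoeff d (k + 1)))"
proof -
  have "cnj \<sigma> = \<sigma>" "lmonom 1 \<sigma> * lmonom (- 1) \<sigma> = 1"
    using assms by (auto simp: mult_single)
  moreover have "lmonom h t * lmonom (- h) (cnj t) = lmonom 0 (t * cnj t)"
    by (simp add: mult_single)
  ultimately have "sesq_form a b d (1 + lmonom 1 \<sigma>) (lmonom h t * (1 - lmonom 1 \<sigma>))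
                              (1 + lmonom 1 \<sigma>) (lmonom h t * (1 - lmonom 1 \<sigma>))
    = a + a + lmonom 1 \<sigma> * a + lmonom (- 1) \<sigma> * a
      + lmonom (- h) (cnj t) * (lmonom 1 \<sigma> * b) - lmonom (- h) (cnj t) * (lmonom (- 1) \<sigma> * b)
      + lmonom h t * (lmonom (- 1) \<sigma> * lstar b) - lmonom h t * (lmonom 1 \<sigma> * lstar b)
      + lmonom 0 (t * cnj t) * d + lmonom 0 (t * cnj t) * d
      - lmonom 0 (t * cnj t) * (lmonom 1 \<sigma> * d) - lmonom 0 (t * cnj t) * (lmonom (- 1) \<sigma> * d)"
    by (simp add: sesq_form_def lstar_simps twist_expand)
  then show ?thesis
    by (simp only: lcoeff_add lcoeff_diff lcoeff_monom_mult lcoeff_lstar) (simp add: algebra_simps)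
qed

lemma lsym_one_plus_monom: "e = 1 \<or> e = -1 \<Longrightarrow> lsym (1 + lmonom 1 (of_int e)) (e, 1)"
  by (rule lsymI) (auto simp: lcoeff_add lcoeff_one lcoeff_monom)

lemma twist_rows:
  assumes "t \<noteq> 0"
  shows "sym_rows (-1, 2 * h) (1, 1) (-1, 1) (1 + lmonom 1 1) (lmonom h t * (1 - lmonom 1 1))
           (1 + lmonom 1 (- 1)) (lmonom h t * (1 - lmonom 1 (- 1)))"
    and "lunit ((1 + lmonom 1 1) * (lmonom h t * (1 - lmonom 1 (- 1)))
           - lmonom h t * (1 - lmonom 1 1) * (1 + lmonom 1 (- 1)))"
proof -
  define z where "z = lmonom 1 (1::complex)"
  have z: "lmonom 1 (- 1) = - z" by (simp add: z_def single_uminus)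
  have "lsym (1 + z) (1, 1)" "lsym (1 - z) (-1, 1)"
    using lsym_one_plus_monom[of 1] lsym_one_plus_monom[of "-1"]
    by (simp_all add: z_def single_uminus)
  then show "sym_rows (-1, 2 * h) (1, 1) (-1, 1) (1 + lmonom 1 1) (lmonom h t * (1 - lmonom 1 1))
      (1 + lmonom 1 (- 1)) (lmonom h t * (1 - lmonom 1 (- 1)))"
    unfolding sym_rows_def z z_def[symmetric]
    by (auto intro!: lsym_mult_eq[OF lsym_monom] simp: type_mult_def)
  have "(1 + z) * (lmonom h t * (1 + z)) - lmonom h t * (1 - z) * (1 - z) = lmonom 0 4 * (lmonom h t * z)"
    by (simp add: algebra_simps)
  also have "\<dots> = lmonom (h + 1) (4 * t)"
    by (simp add: z_def mult_single del: single_numeral)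
  finally show "lunit ((1 + lmonom 1 1) * (lmonom h t * (1 - lmonom 1 (- 1)))
      - lmonom h t * (1 - lmonom 1 1) * (1 + lmonom 1 (- 1)))"
    unfolding z z_def[symmetric] using assms by (simp add: lunit_monom)
qed

lemma antisymmetric_top_coefficients:
  assumes H: "neg_det_hermitian a b d \<alpha> C" and "1 \<le> ldeg d" "ldeg a = ldeg d" "fst \<alpha> = -1"
  defines "p \<equiv> int (ldeg a)"
  obtains h where "\<alpha> = (-1, 2 * h)" "\<forall>k > h + p. lcoeff b k = 0" "\<forall>k < h - p. lcoeff b k = 0"
    "lcoeff a p * lcoeff d p = - (lcoeff b (h + p) * cnj (lcoeff b (h + p)))"
    "lcoeff a p * lcoeff d (p - 1) + lcoeff a (p - 1) * lcoeff d p
       = - (lcoeff b (h + p) * cnj (lcoeff b (h + p - 1))) - lcoeff b (h + p - 1) * cnj (lcoeff b (h + p))"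
proof -
  obtain m where al: "\<alpha> = (-1, m)" using assms(4) by (cases \<alpha>) auto
  have yb: "lsym b \<alpha>" using H by (simp add: neg_det_hermitian_def)
  have "1 \<le> ldeg a" using assms(2,3) by simp
  then obtain hi where hi: "\<forall>k>hi. lcoeff b k = 0" "\<forall>k<m - hi. lcoeff b k = 0" "2 * hi - m = p + p"
    using neg_det_hermitian_support_b[OF H _ assms(2)] assms(3) al p_def by (metis snd_conv)
  define h where "h = hi - p"
  have m: "m = 2 * h" and hi_eq: "hi = h + p" using hi(3) by (auto simp: h_def)
  have b_anti: "lcoeff b k = - lcoeff b (m - k)" for k using lsym_lcoeff[OF yb, of k] al by simp
  have "m - (h - p + 1) = h + p - 1" by (simp add: m)
  then have b_low: "lcoeff b (h - p) = - lcoeff b (h + p)" "lcoeff b (h - p + 1) = - lcoeff b (h + p - 1)"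
    using b_anti[of "h - p"] b_anti[of "h - p + 1"] by (simp_all add: m add_diff_eq)
  note bb = lcoeff_mult_lstar_top[OF hi(1,2)]
  have "p + p \<noteq> 0" "p + p - 1 \<noteq> 0" using assms(2,3) by (auto simp: p_def)
  then have "lcoeff (a * d) (p + p) = lcoeff (b * lstar b) (p + p)"
    "lcoeff (a * d) (p + p - 1) = lcoeff (b * lstar b) (p + p - 1)"
    using neg_det_hermitian_lcoeff[OF H] by blast+
  moreover have "lcoeff (a * d) (p + p) = lcoeff a p * lcoeff d p"
    "lcoeff (a * d) (p + p - 1) = lcoeff a p * lcoeff d (p - 1) + lcoeff a (p - 1) * lcoeff d p"
    using lcoeff_mult_ldeg_top(2,3)[of a d] assms(3) by (simp_all add: p_def)
  moreover have "lcoeff (b * lstar b) (p + p) = - (lcoeff b (h + p) * cnj (lcoeff b (h + p)))"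
    "lcoeff (b * lstar b) (p + p - 1)
       = - (lcoeff b (h + p) * cnj (lcoeff b (h + p - 1))) - lcoeff b (h + p - 1) * cnj (lcoeff b (h + p))"
    using bb(2,3) hi(3) b_low by (simp_all add: hi_eq m algebra_simps)
  ultimately show thesis
    using that[OF al[unfolded m]] hi(1,2) by (simp add: hi_eq m)
qed

lemma lcoeff_twist_form_eq_0:
  assumes \<sigma>: "\<sigma> = 1 \<or> \<sigma> = -1" and "k \<ge> p"
    and az: "\<forall>k > p. lcoeff a k = 0" and dz: "\<forall>k > p. lcoeff d k = 0"
    and bz: "\<forall>k > h + p. lcoeff b k = 0" and bl: "\<forall>k < h - p. lcoeff b k = 0"
    and b_low: "lcoeff b (h - p) = - lcoeff b (h + p)" "lcoeff b (h - p + 1) = - lcoeff b (h + p - 1)"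
    and F: "lcoeff a p + cnj t * lcoeff b (h + p) + t * cnj (lcoeff b (h + p)) - t * cnj t * lcoeff d p = 0"
      "lcoeff a p + t * cnj t * lcoeff d p = 0"
      "lcoeff a (p - 1) + cnj t * lcoeff b (h + p - 1) + t * cnj (lcoeff b (h + p - 1))
         - t * cnj t * lcoeff d (p - 1) = 0"
  shows "lcoeff (sesq_form a b d (1 + lmonom 1 \<sigma>) (lmonom h t * (1 - lmonom 1 \<sigma>))
                   (1 + lmonom 1 \<sigma>) (lmonom h t * (1 - lmonom 1 \<sigma>))) k = 0"
proof -
  consider "k = p" | "k = p + 1" | "k \<ge> p + 2" using \<open>k \<ge> p\<close> by linarith
  then show ?thesis
  proof cases
    case 1
    have "lcoeff (sesq_form a b d (1 + lmonom 1 \<sigma>) (lmonom h t * (1 - lmonom 1 \<sigma>))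
                  (1 + lmonom 1 \<sigma>) (lmonom h t * (1 - lmonom 1 \<sigma>))) k
        = 2 * (lcoeff a p + t * cnj t * lcoeff d p)
          + \<sigma> * (lcoeff a (p - 1) + cnj t * lcoeff b (h + p - 1) + t * cnj (lcoeff b (h + p - 1))
                 - t * cnj t * lcoeff d (p - 1))"
      unfolding lcoeff_twist_form[OF \<sigma>] 1
      using az[rule_format, of "p + 1"] dz[rule_format, of "p + 1"] bz[rule_format, of "p + h + 1"]
        bl[rule_format, of "h - p - 1"] b_low(2)
      by (simp add: algebra_simps)
    then show ?thesis using F(2,3) by simp
  next
    case 2
    have "lcoeff (sesq_form a b d (1 + lmonom 1 \<sigma>) (lmonom h t * (1 - lmonom 1 \<sigma>))
                  (1 + lmonom 1 \<sigma>) (lmonom h t * (1 - lmonom 1 \<sigma>))) k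
        = \<sigma> * (lcoeff a p + cnj t * lcoeff b (h + p) + t * cnj (lcoeff b (h + p)) - t * cnj t * lcoeff d p)"
      unfolding lcoeff_twist_form[OF \<sigma>] 2
      using az[rule_format, of "p + 1"] az[rule_format, of "p + 2"] dz[rule_format, of "p + 1"]
        dz[rule_format, of "p + 2"] bz[rule_format, of "p + h + 2"] bl[rule_format, of "h - p - 2"] b_low(1)
      by (simp add: algebra_simps)
    then show ?thesis using F(1) by simp
  next
    case 3
    then show ?thesis
      unfolding lcoeff_twist_form[OF \<sigma>]
      using az[rule_format, of k] az[rule_format, of "k - 1"] az[rule_format, of "k + 1"]
        dz[rule_format, of k] dz[rule_format, of "k - 1"] dz[rule_format, of "k + 1"]
        bz[rule_format, of "k + h - 1"] bz[rule_format, of "k + h + 1"]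
        bl[rule_format, of "h - k - 1"] bl[rule_format, of "h - k + 1"]
      by simp
  qed
qed

text \<open>If \<open>deg a = deg d\<close> and \<open>b\<close> is antisymmetric, the congruence by
  \<open>[[1 + z, t z\<^sup>h (1 - z)], [1 - z, t z\<^sup>h (1 + z)]]\<close>, with \<open>t\<close> chosen from the top coefficients,
  cancels the two top coefficients of both diagonal entries.\<close>
lemma twist_lowers_ldeg:
  assumes H: "neg_det_hermitian a b d \<alpha> C" and "1 \<le> ldeg d" "ldeg a = ldeg d" "fst \<alpha> = -1"
  obtains x1 x2 y1 y2 s t where "sym_rows \<alpha> s t x1 x2 y1 y2" "lunit (x1 * y2 - x2 * y1)"
    "ldeg (sesq_form a b d x1 x2 x1 x2) + ldeg (sesq_form a b d y1 y2 y1 y2) < ldeg a + ldeg d"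
proof -
  have herm: "lstar a = a" and ya: "lsym a (1, 0)" and yd: "lsym d (1, 0)"
    using H by (simp_all add: neg_det_hermitian_def)
  define p where "p = int (ldeg a)"
  obtain h where al: "\<alpha> = (-1, 2 * h)" and bz: "\<forall>k > h + p. lcoeff b k = 0"
    and bl: "\<forall>k < h - p. lcoeff b k = 0"
    and E1: "lcoeff a p * lcoeff d p = - (lcoeff b (h + p) * cnj (lcoeff b (h + p)))"
    and E2: "lcoeff a p * lcoeff d (p - 1) + lcoeff a (p - 1) * lcoeff d p
       = - (lcoeff b (h + p) * cnj (lcoeff b (h + p - 1))) - lcoeff b (h + p - 1) * cnj (lcoeff b (h + p))"
    using antisymmetric_top_coefficients[OF assms] unfolding p_def by blast
  have az: "\<forall>k > p. lcoeff a k = 0" and dz: "\<forall>k > p. lcoeff d k = 0"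
    using lcoeff_above_ldeg assms(3) by (auto simp: p_def)
  have "a \<noteq> 0" "d \<noteq> 0" using assms(2,3) by auto
  then have x0: "lcoeff a p \<noteq> 0" and D0: "lcoeff d p \<noteq> 0"
    using lcoeff_ldeg_neq_0[OF ya] lcoeff_ldeg_neq_0[OF yd] assms(3) by (auto simp: p_def)
  have xr: "cnj (lcoeff a p) = lcoeff a p" by (rule lcoeff_real_if_hermitian[OF herm ya])
  define t where "t = - lcoeff a p / cnj (lcoeff b (h + p))"
  note F = twist_parameter[OF xr x0 D0 E1 E2, folded t_def]
  have b_anti: "lcoeff b k = - lcoeff b (2 * h - k)" for k
    using lsym_lcoeff[of b \<alpha> k] H al by (simp add: neg_det_hermitian_def)
  have b_low: "lcoeff b (h - p) = - lcoeff b (h + p)" "lcoeff b (h - p + 1) = - lcoeff b (h + p - 1)"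
    using b_anti[of "h - p"] b_anti[of "h - p + 1"] by (simp_all add: algebra_simps)
  have "ldeg (sesq_form a b d (1 + lmonom 1 \<sigma>) (lmonom h t * (1 - lmonom 1 \<sigma>))
               (1 + lmonom 1 \<sigma>) (lmonom h t * (1 - lmonom 1 \<sigma>))) < ldeg a"
    if "\<sigma> = 1 \<or> \<sigma> = -1" for \<sigma>
  proof -
    have "ldeg (sesq_form a b d (1 + lmonom 1 \<sigma>) (lmonom h t * (1 - lmonom 1 \<sigma>))
               (1 + lmonom 1 \<sigma>) (lmonom h t * (1 - lmonom 1 \<sigma>))) \<le> ldeg a - 1"
      using lcoeff_twist_form_eq_0[OF that _ az dz bz bl b_low F(2,3,4)] assms(2,3)
      by (intro ldeg_le) (simp add: p_def)
    then show ?thesis using assms(2,3) by linarith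
  qed
  then have "ldeg (sesq_form a b d (1 + lmonom 1 1) (lmonom h t * (1 - lmonom 1 1))
                (1 + lmonom 1 1) (lmonom h t * (1 - lmonom 1 1)))
           + ldeg (sesq_form a b d (1 + lmonom 1 (- 1)) (lmonom h t * (1 - lmonom 1 (- 1)))
                (1 + lmonom 1 (- 1)) (lmonom h t * (1 - lmonom 1 (- 1)))) < ldeg a + ldeg d"
    using assms(3) by (metis add_strict_mono)
  then show thesis
    using that twist_rows[OF F(1)] unfolding al by blast
qed

section \<open>The factorization\<close>

lemma swap_rows:
  assumes "fst \<alpha> = 1 \<or> fst \<alpha> = -1"
  shows "sym_rows \<alpha> (type_inv \<alpha>) (1, 0) 0 1 1 0" "lunit (0 * 0 - 1 * 1)"
proof -
  show "sym_rows \<alpha> (type_inv \<alpha>) (1, 0) 0 1 1 0"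
    using assms by (auto simp: sym_rows_def type_mult_inv_self type_mult_def type_inv_def
        intro: lsym_one lsym_zero)
  show "lunit (0 * 0 - 1 * 1)"
    using lunit_monom[of "- 1" 0] by (simp add: single_uminus)
qed

lemma sesq_form_swap: "sesq_form a b d x2 x1 y2 y1 = sesq_form d (lstar b) a x1 x2 y1 y2"
  by (simp add: sesq_form_def lstar_lstar algebra_simps)

lemma sym_rows_swap:
  assumes "sym_rows (type_inv \<alpha>) s t x1 x2 y1 y2" "fst \<alpha> = 1 \<or> fst \<alpha> = -1"
  shows "sym_rows \<alpha> (type_mult (type_inv \<alpha>) s) (type_mult (type_inv \<alpha>) t) x2 x1 y2 y1"
proof -
  have "type_mult \<alpha> (type_mult (type_inv \<alpha>) \<tau>) = \<tau>" for \<tau>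
    using assms(2) by (cases \<alpha>; cases \<tau>) (auto simp: type_mult_def type_inv_def)
  then show ?thesis
    using assms(1) by (simp add: sym_rows_def)
qed

lemma neg_det_hermitian_swap:
  assumes "neg_det_hermitian a b d \<alpha> C"
  obtains C' where "neg_det_hermitian d (lstar b) a (type_inv \<alpha>) C'"
proof -
  have "fst \<alpha> = 1 \<or> fst \<alpha> = -1"
    using assms lsym_valid[of b \<alpha>] by (simp add: neg_det_hermitian_def)
  then obtain C' where "neg_det_hermitian (sesq_form a b d 0 1 0 1) (sesq_form a b d 0 1 1 0)
      (sesq_form a b d 1 0 1 0) (type_mult (type_inv \<alpha>) (type_inv (1, 0))) C'"
    using neg_det_hermitian_congruence[OF assms swap_rows] by blast
  moreover have "type_mult (type_inv \<alpha>) (type_inv (1, 0)) = type_inv \<alpha>"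
    by (simp add: type_mult_def type_inv_def)
  ultimately show thesis
    using that by (simp add: sesq_form_unit_rows)
qed

lemma lowering_congruence_ordered:
  assumes H: "neg_det_hermitian a b d \<alpha> C" and "1 \<le> ldeg d" "ldeg d \<le> ldeg a"
  obtains x1 x2 y1 y2 s t where "sym_rows \<alpha> s t x1 x2 y1 y2" "lunit (x1 * y2 - x2 * y1)"
    "ldeg (sesq_form a b d x1 x2 x1 x2) + ldeg (sesq_form a b d y1 y2 y1 y2) < ldeg a + ldeg d"
proof (cases "ldeg a = ldeg d \<and> fst \<alpha> = -1")
  case True
  then have "ldeg a = ldeg d" "fst \<alpha> = -1" by simp_all
  then obtain x1 x2 y1 y2 s t where "sym_rows \<alpha> s t x1 x2 y1 y2" "lunit (x1 * y2 - x2 * y1)"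
    "ldeg (sesq_form a b d x1 x2 x1 x2) + ldeg (sesq_form a b d y1 y2 y1 y2) < ldeg a + ldeg d"
    by (rule twist_lowers_ldeg[OF H assms(2)])
  then show thesis by (rule that)
next
  case False
  obtain f where f: "lsym f \<alpha>" and "ldeg (sesq_form a b d 1 f 1 f) < ldeg a"
    using shear_lowers_ldeg[OF assms False] by blast
  then have "ldeg (sesq_form a b d 1 f 1 f) + ldeg (sesq_form a b d 0 1 0 1) < ldeg a + ldeg d"
    by (simp add: sesq_form_unit_rows)
  with shear_rows[OF f] show thesis by (rule that)
qed

lemma lowering_congruence:
  assumes H: "neg_det_hermitian a b d \<alpha> C" and "1 \<le> ldeg a" "1 \<le> ldeg d"
  obtains x1 x2 y1 y2 s t where "sym_rows \<alpha> s t x1 x2 y1 y2" "lunit (x1 * y2 - x2 * y1)"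
    "ldeg (sesq_form a b d x1 x2 x1 x2) + ldeg (sesq_form a b d y1 y2 y1 y2) < ldeg a + ldeg d"
proof (cases "ldeg d \<le> ldeg a")
  case True
  then show thesis by (rule lowering_congruence_ordered[OF H assms(3)]) (rule that)
next
  case False
  have \<alpha>: "fst \<alpha> = 1 \<or> fst \<alpha> = -1"
    using H lsym_valid[of b \<alpha>] by (simp add: neg_det_hermitian_def)
  obtain C' where H': "neg_det_hermitian d (lstar b) a (type_inv \<alpha>) C'"
    by (rule neg_det_hermitian_swap[OF H])
  have "ldeg a \<le> ldeg d" using False by simp
  then obtain x1 x2 y1 y2 s t where E: "sym_rows (type_inv \<alpha>) s t x1 x2 y1 y2"
    "lunit (x1 * y2 - x2 * y1)"
    "ldeg (sesq_form d (lstar b) a x1 x2 x1 x2) + ldeg (sesq_form d (lstar b) a y1 y2 y1 y2) < ldeg d + ldeg a"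
    by (rule lowering_congruence_ordered[OF H' assms(2)])
  have "lunit (x2 * y1 - x1 * y2)"
    using lunit_uminus[OF E(2)] by simp
  moreover have "ldeg (sesq_form a b d x2 x1 x2 x1) + ldeg (sesq_form a b d y2 y1 y2 y1) < ldeg a + ldeg d"
    using E(3) unfolding sesq_form_swap[of a b d] by linarith
  ultimately show thesis
    by (rule that[OF sym_rows_swap[OF E(1) \<alpha>]])
qed

theorem J_factorable_if_neg_det_hermitian:
  "neg_det_hermitian a b d \<alpha> C \<Longrightarrow> J_factorable a b d \<alpha>"
proof (induction "ldeg a + ldeg d" arbitrary: a b d \<alpha> C rule: less_induct)
  case less
  have herm: "lstar a = a" "lstar d = d" and \<alpha>: "fst \<alpha> = 1 \<or> fst \<alpha> = -1"
    using less.prems lsym_valid[of b \<alpha>] by (simp_all add: neg_det_hermitian_def)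
  consider "ldeg d = 0" | "ldeg a = 0" | "1 \<le> ldeg a" "1 \<le> ldeg d" by linarith
  then show ?case
  proof cases
    case 1
    then show ?thesis by (rule J_factorable_if_ldeg_eq_0[OF less.prems])
  next
    case 2
    obtain C' where "neg_det_hermitian d (lstar b) a (type_inv \<alpha>) C'"
      by (rule neg_det_hermitian_swap[OF less.prems])
    then have "J_factorable d (lstar b) a (type_inv \<alpha>)"
      using 2 by (rule J_factorable_if_ldeg_eq_0)
    moreover have "type_mult (type_inv \<alpha>) (type_inv (1, 0)) = type_inv \<alpha>"
      by (simp add: type_mult_def type_inv_def)
    ultimately show ?thesis
      using J_factorable_of_congruent[OF herm \<alpha> swap_rows[OF \<alpha>]] by (simp add: sesq_form_unit_rows)
  next
    case 3
    then obtain x1 x2 y1 y2 s t where E: "sym_rows \<alpha> s t x1 x2 y1 y2" "lunit (x1 * y2 - x2 * y1)"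
      and lower: "ldeg (sesq_form a b d x1 x2 x1 x2) + ldeg (sesq_form a b d y1 y2 y1 y2) < ldeg a + ldeg d"
      by (rule lowering_congruence[OF less.prems])
    obtain C' where "neg_det_hermitian (sesq_form a b d x1 x2 x1 x2) (sesq_form a b d x1 x2 y1 y2)
        (sesq_form a b d y1 y2 y1 y2) (type_mult s (type_inv t)) C'"
      using neg_det_hermitian_congruence[OF less.prems E] by blast
    then have "J_factorable (sesq_form a b d x1 x2 x1 x2) (sesq_form a b d x1 x2 y1 y2)
        (sesq_form a b d y1 y2 y1 y2) (type_mult s (type_inv t))"
      by (rule less.hyps[OF lower])
    then show ?thesis by (rule J_factorable_of_congruent[OF herm \<alpha> E])
  qed
qed

section \<open>Back to coefficient functions\<close>

lemma lcoeff_Abs_poly_mapping: "laurent u \<Longrightarrow> lcoeff (Abs_poly_mapping u) = u"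
  by (simp add: laurent_def)

lemma Collect_lcoeff_neq_0_eq: "{k. lcoeff p k \<noteq> 0} = lsupp p"
  by (auto simp: in_keys_iff)

lemma laurent_lcoeff: "laurent (lcoeff p)"
  by (simp add: laurent_def)

lemma lp_mult_lcoeff: "lp_mult (lcoeff p) (lcoeff q) = lcoeff (p * q)"
  by (simp add: lp_mult_def Collect_lcoeff_neq_0_eq lcoeff_mult fun_eq_iff)

lemma lp_star_lcoeff: "lp_star (lcoeff p) = lcoeff (lstar p)"
  by (simp add: lp_star_def lcoeff_lstar fun_eq_iff)

lemma lp_add_lcoeff: "lp_add (lcoeff p) (lcoeff q) = lcoeff (p + q)"
  by (simp add: lp_add_def lcoeff_add fun_eq_iff)

lemma lp_neg_lcoeff: "lp_neg (lcoeff p) = lcoeff (- p)"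
  by (simp add: lp_neg_def fun_eq_iff)

lemma lp_eval_lcoeff: "lp_eval (lcoeff p) z = leval p z"
  by (simp add: lp_eval_def leval_def Collect_lcoeff_neq_0_eq)

lemma neg_det_hermitian_if_matrix:
  fixes A :: "nat \<Rightarrow> nat \<Rightarrow> lpoly"
  assumes lp: "\<forall>j\<in>{1,2}. \<forall>k\<in>{1,2}. laurent (A j k)"
    and herm: "\<forall>j\<in>{1,2}. \<forall>k\<in>{1,2}. lp_star (A k j) = A j k"
    and sym: "has_sym (A 1 1) (1, 0)" "has_sym (A 1 2) \<alpha>" "has_sym (A 2 2) (1, 0)"
    and "C < 0"
    and det: "\<forall>z. cmod z = 1 \<longrightarrow>
        lp_eval (A 1 1) z * lp_eval (A 2 2) z - lp_eval (A 1 2) z * lp_eval (A 2 1) z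
          = complex_of_real C"
  defines "a \<equiv> Abs_poly_mapping (A 1 1)" and "b \<equiv> Abs_poly_mapping (A 1 2)"
    and "d \<equiv> Abs_poly_mapping (A 2 2)"
  shows "neg_det_hermitian a b d \<alpha> C"
    and "A 1 1 = lcoeff a" "A 1 2 = lcoeff b" "A 2 1 = lcoeff (lstar b)" "A 2 2 = lcoeff d"
proof -
  show entries: "A 1 1 = lcoeff a" "A 1 2 = lcoeff b" "A 2 2 = lcoeff d"
    using lp by (simp_all add: a_def b_def d_def lcoeff_Abs_poly_mapping)
  show A21: "A 2 1 = lcoeff (lstar b)"
    using herm entries(2) lp_star_lcoeff[of b] by force
  have "lstar a = a" "lstar d = d"
    using herm entries lp_star_lcoeff[of a] lp_star_lcoeff[of d] by (metis insertCI poly_mapping_eqI)+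
  moreover have "lsym a (1, 0)" "lsym b \<alpha>" "lsym d (1, 0)"
    using sym entries by (simp_all add: lsym_def)
  moreover have "a * d - b * lstar b = lmonom 0 (of_real C)"
  proof -
    have "a * d - b * lstar b - lmonom 0 (of_real C) = 0"
    proof (rule lpm_eq_0_if_leval_unit_circle)
      fix z :: complex assume z: "cmod z = 1"
      have "leval a z * leval d z - leval b z * leval (lstar b) z = of_real C"
        using det[rule_format, OF z] by (simp only: entries A21 lp_eval_lcoeff)
      moreover have "z \<noteq> 0" using z by auto
      ultimately show "leval (a * d - b * lstar b - lmonom 0 (of_real C)) z = 0"
        by (simp add: leval_diff leval_mult leval_monom)
    qed
    then show ?thesis by simp
  qed
  ultimately show "neg_det_hermitian a b d \<alpha> C"
    using \<open>C < 0\<close> by (simp add: neg_det_hermitian_def)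
qed

lemma compat_sym_2x2I:
  assumes sym: "\<forall>j\<in>{1,2}. \<forall>k\<in>{1,2}. has_sym (U j k) (\<sigma> j k)"
    and ratio: "type_mult (\<sigma> 1 1) (type_inv (\<sigma> 2 1)) = \<alpha>" "type_mult (\<sigma> 1 2) (type_inv (\<sigma> 2 2)) = \<alpha>"
  shows "compat_sym 2 2 U"
proof -
  define \<tau> where "\<tau> j = (if j = (1::nat) then (1::int, 0::int) else \<alpha>)" for j
  have valid: "valid_type (\<sigma> j k)" if "j \<in> {1, 2}" "k \<in> {1, 2}" for j k
    using sym that by (auto simp: has_sym_def)
  have column: "type_mult (type_inv \<alpha>) (\<sigma> 1 k) = \<sigma> 2 k \<and> valid_type \<alpha>" if "k \<in> {1, 2}" for k
  proof -
    have "type_mult (\<sigma> 1 k) (type_inv (\<sigma> 2 k)) = \<alpha>"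
      using ratio that by auto
    then show ?thesis
      using valid[of 1 k] valid[of 2 k] that
      by (cases "\<sigma> 1 k"; cases "\<sigma> 2 k") (auto simp: type_mult_def type_inv_def valid_type_def)
  qed
  have "{1..2::nat} = {1, 2}" by auto
  moreover have "type_mult (type_inv (1, 0)) \<rho> = \<rho>" for \<rho> :: symtype
    by (simp add: type_mult_def type_inv_def)
  moreover have "valid_type \<alpha>" using column[of 1] by simp
  ultimately have "(\<forall>j\<in>{1..2}. valid_type (\<tau> j)) \<and> (\<forall>k\<in>{1..2}. valid_type (\<sigma> 1 k)) \<and>
      (\<forall>j\<in>{1..2}. \<forall>k\<in>{1..2}. has_sym (U j k) (type_mult (type_inv (\<tau> j)) (\<sigma> 1 k)))"
    using sym valid column by (simp add: \<tau>_def valid_type_def)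
  then show ?thesis
    unfolding compat_sym_def by blast
qed

lemma matrix_factorization_if_J_factorable:
  fixes A :: "nat \<Rightarrow> nat \<Rightarrow> lpoly"
  assumes F: "J_factorable a b d \<alpha>"
    and A: "A 1 1 = lcoeff a" "A 1 2 = lcoeff b" "A 2 1 = lcoeff (lstar b)" "A 2 2 = lcoeff d"
  shows "\<exists>U :: nat \<Rightarrow> nat \<Rightarrow> lpoly.
           (\<forall>j\<in>{1,2}. \<forall>k\<in>{1,2}. laurent (U j k)) \<and>
           compat_sym 2 2 U \<and>
           (\<forall>j\<in>{1,2}. \<forall>k\<in>{1,2}.
              A j k = lp_add (lp_mult (U j 1) (lp_star (U k 1)))
                             (lp_neg (lp_mult (U j 2) (lp_star (U k 2))))) \<and>
           (\<exists>\<sigma> :: nat \<Rightarrow> nat \<Rightarrow> symtype.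
              (\<forall>j\<in>{1,2}. \<forall>k\<in>{1,2}. has_sym (U j k) (\<sigma> j k)) \<and>
              type_mult (\<sigma> 1 1) (type_inv (\<sigma> 2 1)) = \<alpha> \<and>
              type_mult (\<sigma> 1 2) (type_inv (\<sigma> 2 2)) = \<alpha>)"
proof -
  obtain u11 u12 u21 u22 \<beta> s t where rows: "sym_rows \<beta> s t u11 u12 u21 u22"
    and st: "type_mult s (type_inv t) = \<alpha>"
    and a: "a = sesq_form 1 0 (- 1) u11 u12 u11 u12" and b: "b = sesq_form 1 0 (- 1) u11 u12 u21 u22"
    and d: "d = sesq_form 1 0 (- 1) u21 u22 u21 u22"
    using F unfolding J_factorable_def by blast
  define u where "u j k = (if j = (1::nat) then (if k = (1::nat) then u11 else u12)
                          else (if k = 1 then u21 else u22))" for j k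
  define \<sigma> where "\<sigma> j k = (if j = (1::nat) then (if k = (1::nat) then s else type_mult \<beta> s)
                          else (if k = 1 then t else type_mult \<beta> t))" for j k
  define U where "U j k = lcoeff (u j k)" for j k
  have "lstar b = sesq_form 1 0 (- 1) u21 u22 u11 u12"
    unfolding b by (rule lstar_sesq_form) (simp_all add: lstar_simps)
  then have "\<forall>j\<in>{1,2}. \<forall>k\<in>{1,2}.
      A j k = lp_add (lp_mult (U j 1) (lp_star (U k 1))) (lp_neg (lp_mult (U j 2) (lp_star (U k 2))))"
    using A by (auto simp: U_def u_def a b d sesq_form_J lp_star_lcoeff lp_mult_lcoeff
        lp_neg_lcoeff lp_add_lcoeff)
  moreover have sym: "\<forall>j\<in>{1,2}. \<forall>k\<in>{1,2}. has_sym (U j k) (\<sigma> j k)"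
    using rows by (auto simp: U_def u_def \<sigma>_def sym_rows_def lsym_def)
  moreover have ratio: "type_mult (\<sigma> 1 1) (type_inv (\<sigma> 2 1)) = \<alpha>"
    "type_mult (\<sigma> 1 2) (type_inv (\<sigma> 2 2)) = \<alpha>"
    using st sym_rows_valid(3)[OF rows]
    by (cases \<beta>, auto simp: \<sigma>_def type_mult_def type_inv_def)+
  moreover have "\<forall>j\<in>{1,2}. \<forall>k\<in>{1,2}. laurent (U j k)"
    by (simp add: U_def laurent_lcoeff)
  ultimately show ?thesis
    using compat_sym_2x2I[OF sym ratio] by blast
qed

theorem theorem3p4:
  fixes A :: "nat \<Rightarrow> nat \<Rightarrow> lpoly" and \<alpha> :: symtype and C :: real
  assumes lp: "\<forall>j\<in>{1,2}. \<forall>k\<in>{1,2}. laurent (A j k)"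
    and herm: "\<forall>j\<in>{1,2}. \<forall>k\<in>{1,2}. lp_star (A k j) = A j k"
    and compat: "compat_sym 2 2 A"
    and sym11: "has_sym (A 1 1) (1, 0)"
    and sym12: "has_sym (A 1 2) \<alpha>"
    and sym21: "has_sym (A 2 1) (type_star \<alpha>)"
    and sym22: "has_sym (A 2 2) (1, 0)"
    and Cneg: "C < 0"
    and det: "\<forall>z. cmod z = 1 \<longrightarrow>
        lp_eval (A 1 1) z * lp_eval (A 2 2) z - lp_eval (A 1 2) z * lp_eval (A 2 1) z
          = complex_of_real C"
  shows "\<exists>U :: nat \<Rightarrow> nat \<Rightarrow> lpoly.
           (\<forall>j\<in>{1,2}. \<forall>k\<in>{1,2}. laurent (U j k)) \<and>
           compat_sym 2 2 U \<and>
           (\<forall>j\<in>{1,2}. \<forall>k\<in>{1,2}.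
              A j k = lp_add (lp_mult (U j 1) (lp_star (U k 1)))
                             (lp_neg (lp_mult (U j 2) (lp_star (U k 2))))) \<and>
           (\<exists>\<sigma> :: nat \<Rightarrow> nat \<Rightarrow> symtype.
              (\<forall>j\<in>{1,2}. \<forall>k\<in>{1,2}. has_sym (U j k) (\<sigma> j k)) \<and>
              type_mult (\<sigma> 1 1) (type_inv (\<sigma> 2 1)) = \<alpha> \<and>
              type_mult (\<sigma> 1 2) (type_inv (\<sigma> 2 2)) = \<alpha>)"
proof -
  note H = neg_det_hermitian_if_matrix[OF lp herm sym11 sym12 sym22 Cneg det]
  show ?thesis
    by (rule matrix_factorization_if_J_factorable[OF J_factorable_if_neg_det_hermitian[OF H(1)] H(2-5)])
qed

end
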